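(* Fix $\mu\in\mathbb{R}$ and $p\in[1,\infty]$, let $k(t)=e^{\mu t}$ and for real $n>0$ let $V_k^n$ denote the operator on $L^p(0,1)$ of convolution with $k^{*n}(t)=\frac{1}{\Gamma(n)}t^{n-1}e^{\mu t}$, i.e. $(V_k^nu)(t)=\int_0^t k^{*n}(t-s)u(s)\,ds$ (for integer $n$ this is the $n$-th power of $V_k$). Then $$V_k^n\sim\frac{e^{-(n-1)}}{\Gamma(n)}S_{n-1+\mu}\quad\text{and}\quad \|V_k^n\|_p\sim\frac{C_p e^\mu}{\Gamma(n+1)}$$ as $n\to\infty$ through $\mathbb{R}^+$, where $(S_\lambda f)(t)=\int_0^1 e^{\lambda(t-s)}f(s)\,ds$.
   Context: $C_p=1/(p^{1/p}q^{1/q})$ if $1<p<\infty$ where $1/p+1/q=1$, and $C_p=1$ if $p=1$ or $p=\infty$. $\|\cdot\|_p$ denotes the operator norm on $L^p(0,1)$. For operator sequences, $A_n\sim B_n$ means $\|A_n-B_n\|/\|A_n\|\to0$; for numbers, $a_n\sim b_n$ means $a_n/b_n\to1$. *)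

theory Defs
  imports "HOL-Analysis.Analysis" "HOL-Probability.Essential_Supremum"
begin

text \<open>Exponent p in [1,infinity] is an extended real. Functions on (0,1) are real-valued
  functions on the reals; only their values on [0,1] matter.\<close>

definition inLp :: "ereal \<Rightarrow> (real \<Rightarrow> real) \<Rightarrow> bool" where
  "inLp p f \<longleftrightarrow> f \<in> borel_measurable (lebesgue_on {0..1}) \<and>
     (if p = \<infinity> then esssup (lebesgue_on {0..1}) (\<lambda>x. ereal \<bar>f x\<bar>) < \<infinity>
      else integrable (lebesgue_on {0..1}) (\<lambda>x. \<bar>f x\<bar> powr real_of_ereal p))"

definition lpnorm :: "ereal \<Rightarrow> (real \<Rightarrow> real) \<Rightarrow> real" where
  "lpnorm p f = (if p = \<infinity> then real_of_ereal (esssup (lebesgue_on {0..1}) (\<lambda>x. ereal \<bar>f x\<bar>))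
      else (integral\<^sup>L (lebesgue_on {0..1}) (\<lambda>x. \<bar>f x\<bar> powr real_of_ereal p))
             powr (1 / real_of_ereal p))"

definition opnorm :: "ereal \<Rightarrow> ((real \<Rightarrow> real) \<Rightarrow> (real \<Rightarrow> real)) \<Rightarrow> real" where
  "opnorm p T = Sup {lpnorm p (T u) | u. inLp p u \<and> lpnorm p u \<le> 1}"

definition Cp :: "ereal \<Rightarrow> real" where
  "Cp p = (if p = 1 \<or> p = \<infinity> then 1 else
     (let r = real_of_ereal p; q = r / (r - 1) in 1 / (r powr (1/r) * q powr (1/q))))"

definition Vk :: "real \<Rightarrow> real \<Rightarrow> (real \<Rightarrow> real) \<Rightarrow> (real \<Rightarrow> real)" where
  "Vk \<mu> n u = (\<lambda>t. LINT s:{0..t}|lebesgue. ((t - s) powr (n - 1) * exp (\<mu> * (t - s)) / Gamma n) * u s)"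

definition Sop :: "real \<Rightarrow> (real \<Rightarrow> real) \<Rightarrow> (real \<Rightarrow> real)" where
  "Sop la f = (\<lambda>t. LINT s:{0..1}|lebesgue. exp (la * (t - s)) * f s)"

end

theory Submission
  imports Defs "HOL-Real_Asymp.Real_Asymp"
begin

text \<open>
  For \<open>x \<ge> 0\<close> one has \<open>x^N \<le> exp (N (x - 1))\<close>, and for \<open>x \<le> 1\<close> the two sides differ by at most
  \<open>(32/N) exp (N (x - 1) / 2)\<close>. So the kernel \<open>t^(n-1) e^(\<mu> t) / \<Gamma>(n)\<close> of \<open>V_k^n\<close> equals the
  rank-one kernel \<open>e^(-(n-1)) e^((n-1+\<mu>) t) / \<Gamma>(n)\<close> of \<open>e^(-(n-1)) S_(n-1+\<mu>) / \<Gamma>(n)\<close>, up to an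
  error dominated by \<open>32 e^|\<mu>| e^(-(n-1)/2) e^((n-1) t/2) / ((n-1) \<Gamma>(n))\<close>.

  An operator with \<open>|T u (t)| \<le> E e^(\<nu> t) \<integral> e^(-\<nu> s) |u(s)| ds\<close> has, by Hoelder's inequality,
  norm at most \<open>E \<parallel>e^(\<nu> t)\<parallel>_p \<parallel>e^(-\<nu> s)\<parallel>_q\<close>, a product of norms asymptotic to \<open>C_p e^\<nu> / \<nu>\<close>.
  With \<open>\<nu> = n - 1 + \<mu>\<close> this bounds \<open>\<parallel>V_k^n\<parallel>\<close> asymptotically by \<open>C_p e^\<mu> / \<Gamma>(n+1)\<close>; with
  \<open>\<nu> = (n-1)/2\<close> it bounds the error operator by \<open>O(1/n)\<close> times that.

  For the matching lower bound, \<open>V_k^n\<close> is tested on \<open>e^(-a s)\<close> (on the constant 1 if \<open>p = \<infinity>\<close>).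
  On \<open>[1-2\<delta>, 1]\<close> the kernel dominates \<open>e^(\<mu> - 2\<delta>|\<mu>|) e^(m (x-1)) / \<Gamma>(n)\<close> with
  \<open>m = (n-1)/(1-2\<delta>)\<close>, and \<open>a = s m\<close> with the Hoelder-extremal \<open>s = 1/(r-1)\<close> (\<open>s = 1/\<delta>\<close> if
  \<open>p = 1\<close>) recovers \<open>C_p\<close> up to factors that tend to 1 as \<open>\<delta> \<rightarrow> 0\<close>.
\<close>

lemma integral_lebesgue_on_FTC:
  fixes f F :: "real \<Rightarrow> real"
  assumes "a \<le> b" "continuous_on {a..b} f"
    "\<And>x. a \<le> x \<Longrightarrow> x \<le> b \<Longrightarrow> (F has_real_derivative f x) (at x within {a..b})"
  shows "integral\<^sup>L (lebesgue_on {a..b}) f = F b - F a"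
proof -
  have "(f has_integral F b - F a) {a..b}"
    using assms by (intro fundamental_theorem_of_calculus)
      (auto simp: has_real_derivative_iff_has_vector_derivative[symmetric])
  then show ?thesis
    using lebesgue_integral_eq_integral[OF continuous_imp_integrable_real[OF assms(2)]]
    by (simp add: integral_unique)
qed

lemma integral_exp_lebesgue_on:
  fixes a b c d :: real
  assumes "a \<le> b" "c \<noteq> 0"
  shows "integral\<^sup>L (lebesgue_on {a..b}) (\<lambda>t. exp (c * (t - d))) = (exp (c * (b - d)) - exp (c * (a - d))) / c"
proof -
  have "integral\<^sup>L (lebesgue_on {a..b}) (\<lambda>t. exp (c * (t - d))) = exp (c * (b - d)) / c - exp (c * (a - d)) / c"
    using assms(1) by (intro integral_lebesgue_on_FTC[where F="\<lambda>x. exp (c * (x - d)) / c"])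
      (auto intro!: continuous_intros derivative_eq_intros simp: assms(2))
  then show ?thesis by (simp add: diff_divide_distrib)
qed

lemma integral_exp_lebesgue_on_01:
  fixes c :: real
  assumes "c \<noteq> 0"
  shows "integral\<^sup>L (lebesgue_on {0..1}) (\<lambda>t. exp (c * t)) = (exp c - 1) / c"
  using integral_exp_lebesgue_on[of 0 1 c 0] assms by simp

lemma integral_lebesgue_on_01_indicator:
  fixes f :: "real \<Rightarrow> real"
  assumes "0 \<le> a" "b \<le> 1"
  shows "integral\<^sup>L (lebesgue_on {0..1}) (\<lambda>y. indicator {a..b} y * f y) = (LINT y:{a..b}|lebesgue. f y)"
proof -
  have "integral\<^sup>L (lebesgue_on {0..1}) (\<lambda>y. indicator {a..b} y * f y) =
      integral\<^sup>L lebesgue (\<lambda>y. indicator {0..1} y *\<^sub>R (indicator {a..b} y * f y))"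
    by (rule integral_restrict_space) simp
  also have "\<dots> = integral\<^sup>L lebesgue (\<lambda>y. indicator {a..b} y *\<^sub>R f y)"
    using assms by (intro Bochner_Integration.integral_cong) (auto simp: indicator_def)
  finally show ?thesis by (simp add: set_lebesgue_integral_def)
qed

lemma set_integral_eq_integral_lebesgue_on:
  fixes f :: "real \<Rightarrow> real"
  shows "(LINT y:{a..b}|lebesgue. f y) = integral\<^sup>L (lebesgue_on {a..b}) f"
  by (simp add: set_lebesgue_integral_def integral_restrict_space)

lemma measurable_ident_lebesgue_on [measurable]: "(\<lambda>x::real. x) \<in> borel_measurable (lebesgue_on S)"
  by (intro measurable_restrict_space1 measurable_completion) simp

lemma integrable_indicator_times_continuous:
  fixes g :: "real \<Rightarrow> real"
  assumes "continuous_on {0..1} g"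
  shows "integrable (lebesgue_on {0..1}) (\<lambda>y. indicator {a..b} y * g y)"
proof (rule Bochner_Integration.integrable_bound)
  show "integrable (lebesgue_on {0..1}) g" using assms by (rule continuous_imp_integrable_real)
  have "g \<in> borel_measurable (lebesgue_on {0..1})"
    using assms by (rule continuous_imp_measurable_on_sets_lebesgue) simp
  then show "(\<lambda>y. indicator {a..b} y * g y) \<in> borel_measurable (lebesgue_on {0..1})"
    by measurable
  show "AE x in lebesgue_on {0..1}. norm (indicator {a..b} x * g x) \<le> norm (g x)"
    by (rule AE_I2) (auto simp: indicator_def)
qed

lemma AE_eq_0_of_integral_powr_eq_0:
  fixes f :: "'a \<Rightarrow> real"
  assumes "r > 0" "integrable M (\<lambda>x. f x powr r)" "\<And>x. x \<in> space M \<Longrightarrow> 0 \<le> f x"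
    "integral\<^sup>L M (\<lambda>x. f x powr r) = 0"
  shows "AE x in M. f x = 0"
proof -
  have "AE x in M. f x powr r = 0"
    using assms by (subst integral_nonneg_eq_0_iff_AE[symmetric]) auto
  then show ?thesis by (rule eventually_mono) simp
qed

lemma Holder_integrable:
  fixes f g :: "'a \<Rightarrow> real"
  assumes r: "r > 1" and q: "q = r/(r-1)"
    and fm: "f \<in> borel_measurable M" and gm: "g \<in> borel_measurable M"
    and f0: "\<And>x. x \<in> space M \<Longrightarrow> 0 \<le> f x" and g0: "\<And>x. x \<in> space M \<Longrightarrow> 0 \<le> g x"
    and fi: "integrable M (\<lambda>x. f x powr r)" and gi: "integrable M (\<lambda>x. g x powr q)"
  shows "integrable M (\<lambda>x. f x * g x)"
proof (rule Bochner_Integration.integrable_bound)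
  have q1: "q > 1" and rq: "1/r + 1/q = 1" unfolding q using r by (simp_all add: field_simps)
  show "integrable M (\<lambda>x. f x powr r / r + g x powr q / q)" using fi gi by auto
  show "(\<lambda>x. f x * g x) \<in> borel_measurable M" using fm gm by measurable
  show "AE x in M. norm (f x * g x) \<le> norm (f x powr r / r + g x powr q / q)"
  proof (rule AE_I2)
    fix x assume "x \<in> space M"
    then have "0 \<le> f x * g x" "f x * g x \<le> f x powr r / r + g x powr q / q"
      using Youngs_inequality[OF r q1 rq] f0 g0 by auto
    then show "norm (f x * g x) \<le> norm (f x powr r / r + g x powr q / q)" by simp
  qed
qed

lemma Holder_inequality_real:
  fixes f g :: "'a \<Rightarrow> real"
  assumes r: "r > 1" and q: "q = r/(r-1)"
    and "f \<in> borel_measurable M" "g \<in> borel_measurable M"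
    and f0: "\<And>x. x \<in> space M \<Longrightarrow> 0 \<le> f x" and g0: "\<And>x. x \<in> space M \<Longrightarrow> 0 \<le> g x"
    and fi: "integrable M (\<lambda>x. f x powr r)" and gi: "integrable M (\<lambda>x. g x powr q)"
  shows "integral\<^sup>L M (\<lambda>x. f x * g x) \<le> (integral\<^sup>L M (\<lambda>x. f x powr r)) powr (1/r) * (integral\<^sup>L M (\<lambda>x. g x powr q)) powr (1/q)"
proof -
  have q1: "q > 1" and rq: "1/r + 1/q = 1" unfolding q using r by (simp_all add: field_simps)
  define F where "F = integral\<^sup>L M (\<lambda>x. f x powr r)"
  define G where "G = integral\<^sup>L M (\<lambda>x. g x powr q)"
  have F0: "F \<ge> 0" and G0: "G \<ge> 0" unfolding F_def G_def by (auto intro!: integral_nonneg_AE)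
  show "integral\<^sup>L M (\<lambda>x. f x * g x) \<le> F powr (1/r) * G powr (1/q)"
  proof (cases "F = 0 \<or> G = 0")
    case True
    then have "AE x in M. f x = 0 \<or> g x = 0"
      using AE_eq_0_of_integral_powr_eq_0[of r M f] AE_eq_0_of_integral_powr_eq_0[of q M g]
        r q1 f0 g0 fi gi unfolding F_def G_def by (auto elim: eventually_mono)
    then have "integral\<^sup>L M (\<lambda>x. f x * g x) = 0" by (auto intro: integral_eq_zero_AE elim: eventually_mono)
    then show ?thesis by simp
  next
    case False
    then have Fp: "F > 0" and Gp: "G > 0" using F0 G0 by auto
    define a where "a = F powr (1/r)"
    define b where "b = G powr (1/q)"
    have ap: "a > 0" and bp: "b > 0" unfolding a_def b_def using Fp Gp by auto
    have ar: "a powr r = F" unfolding a_def using Fp r by (simp add: powr_powr)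
    have bq: "b powr q = G" unfolding b_def using Gp q1 by (simp add: powr_powr)
    \<comment> \<open>Young's inequality for the normalised functions f/a and g/b\<close>
    have pt: "f x * g x / (a*b) \<le> f x powr r / (r*F) + g x powr q / (q*G)" if x: "x \<in> space M" for x
    proof -
      have "f x * g x / (a*b) = (f x / a) * (g x / b)" by simp
      also have "\<dots> \<le> (f x / a) powr r / r + (g x / b) powr q / q"
        using f0[OF x] g0[OF x] ap bp by (intro Youngs_inequality[OF r q1 rq]) auto
      also have "(f x / a) powr r = f x powr r / F" using f0[OF x] ap ar by (simp add: powr_divide)
      also have "(g x / b) powr q = g x powr q / G" using g0[OF x] bp bq by (simp add: powr_divide)
      finally show ?thesis by (simp add: ac_simps)
    qed
    have "integral\<^sup>L M (\<lambda>x. f x * g x) / (a*b) = integral\<^sup>L M (\<lambda>x. f x * g x / (a*b))" by simp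
    also have "\<dots> \<le> integral\<^sup>L M (\<lambda>x. f x powr r / (r*F) + g x powr q / (q*G))"
      using pt Holder_integrable[OF assms] fi gi by (intro integral_mono) auto
    also have "\<dots> = F / (r*F) + G / (q*G)"
      using fi gi unfolding F_def G_def by simp
    also have "\<dots> = 1" using rq Fp Gp by simp
    finally show ?thesis using ap bp unfolding a_def b_def by (simp add: field_simps)
  qed
qed

section \<open>Norms and operator norms on \<open>L^p(0,1)\<close>\<close>

lemma emeasure_lebesgue_01_space_neq_0: "emeasure (lebesgue_on {0..1::real}) (space (lebesgue_on {0..1})) \<noteq> 0"
  by (simp add: emeasure_restrict_space)

lemma esssup_abs_nonneg:
  fixes f :: "real \<Rightarrow> real"
  shows "0 \<le> esssup (lebesgue_on {0..1}) (\<lambda>x. ereal \<bar>f x\<bar>)"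
proof -
  have "esssup (lebesgue_on {0..1::real}) (\<lambda>x. 0::ereal) = 0"
    by (rule esssup_const[OF emeasure_lebesgue_01_space_neq_0])
  moreover have "esssup (lebesgue_on {0..1::real}) (\<lambda>x. 0::ereal) \<le> esssup (lebesgue_on {0..1}) (\<lambda>x. ereal \<bar>f x\<bar>)"
    by (rule esssup_mono) auto
  ultimately show ?thesis by simp
qed

lemma esssup_ge_of_interval:
  fixes f :: "real \<Rightarrow> real"
  assumes fm: "f \<in> borel_measurable (lebesgue_on {0..1})" and ab: "0 \<le> a" "a < b" "b \<le> 1"
    and fc: "\<And>t. t \<in> {a..b} \<Longrightarrow> c \<le> f t"
  shows "ereal c \<le> esssup (lebesgue_on {0..1}) (\<lambda>x. ereal (f x))"
  unfolding esssup_eq_AE[OF borel_measurable_ereal[OF fm]]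
proof (rule Inf_greatest, clarsimp)
  fix z assume ae: "AE x in lebesgue_on {0..1}. ereal (f x) \<le> z"
  show "ereal c \<le> z"
  proof (rule ccontr)
    assume cz: "\<not> ereal c \<le> z"
    have "AE x in lebesgue_on {0..1}. x \<notin> {a..b}"
      using ae by (rule eventually_mono) (meson cz fc ereal_less_eq(3) order_trans)
    then have "{a..b} \<in> null_sets (lebesgue_on {0..1})"
      using ab by (simp add: AE_iff_null_sets sets_restrict_space_iff)
    moreover have "emeasure (lebesgue_on {0..1}) {a..b} = ennreal (b - a)"
      using ab by (subst emeasure_restrict_space) auto
    ultimately show False using ab by auto
  qed
qed

lemma lpnorm_nonneg: "0 \<le> lpnorm p f"
  unfolding lpnorm_def using esssup_abs_nonneg[of f] by (auto simp: real_of_ereal_pos)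

lemma inLp_zero: "inLp p (\<lambda>x. 0)"
  unfolding inLp_def by (auto simp: esssup_const[OF emeasure_lebesgue_01_space_neq_0])

lemma lpnorm_zero: "lpnorm p (\<lambda>x. 0) = 0"
  unfolding lpnorm_def by (auto simp: esssup_const[OF emeasure_lebesgue_01_space_neq_0])

lemma inLp_measurable: "inLp p u \<Longrightarrow> u \<in> borel_measurable (lebesgue_on {0..1})"
  unfolding inLp_def by simp

lemma ereal_ge_1_cases:
  assumes "1 \<le> p"
  obtains "p = \<infinity>" | r where "p = ereal r" "1 \<le> r"
  using assms by (cases p) auto

lemma Lp_exponent_cases:
  assumes "1 \<le> p"
  obtains "p = \<infinity>" | "p = 1" | r where "p = ereal r" "r > 1"
  using assms by (cases rule: ereal_ge_1_cases) (auto simp: one_ereal_def order_le_less)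

text \<open>Since opnorm is a supremum of reals, it is meaningful only for operators
  bounded in the following sense.\<close>

definition Lp_bounded_by :: "ereal \<Rightarrow> ((real \<Rightarrow> real) \<Rightarrow> (real \<Rightarrow> real)) \<Rightarrow> real \<Rightarrow> bool" where
  "Lp_bounded_by p T B \<longleftrightarrow> (\<forall>u. inLp p u \<longrightarrow> lpnorm p u \<le> 1 \<longrightarrow> lpnorm p (T u) \<le> B)"

lemma opnorm_le: "Lp_bounded_by p T B \<Longrightarrow> opnorm p T \<le> B"
  unfolding opnorm_def Lp_bounded_by_def
  by (rule cSup_least) (use inLp_zero lpnorm_zero in force, blast)

lemma lpnorm_le_opnorm:
  assumes "Lp_bounded_by p T B" "inLp p u" "lpnorm p u \<le> 1"
  shows "lpnorm p (T u) \<le> opnorm p T"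
  unfolding opnorm_def
proof (rule cSup_upper)
  show "bdd_above {lpnorm p (T u) |u. inLp p u \<and> lpnorm p u \<le> 1}"
    using assms(1) unfolding Lp_bounded_by_def by (intro bdd_aboveI[where M=B]) auto
qed (use assms(2,3) in auto)

lemma opnorm_nonneg: "Lp_bounded_by p T B \<Longrightarrow> 0 \<le> opnorm p T"
  using lpnorm_le_opnorm[OF _ inLp_zero, of p T B] lpnorm_zero[of p] lpnorm_nonneg[of p "T (\<lambda>x. 0)"]
  by force

lemma lpnorm_infinity_le:
  fixes f :: "real \<Rightarrow> real"
  assumes B: "B \<ge> 0" and bd: "\<And>t. t \<in> {0..1} \<Longrightarrow> \<bar>f t\<bar> \<le> B"
  shows "lpnorm \<infinity> f \<le> B"
proof (cases "(\<lambda>x. ereal \<bar>f x\<bar>) \<in> borel_measurable (lebesgue_on {0..1})")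
  case True
  have "esssup (lebesgue_on {0..1}) (\<lambda>x. ereal \<bar>f x\<bar>) \<le> ereal B"
    using bd by (intro esssup_I[OF True] AE_I2) simp
  then show ?thesis
    using B esssup_abs_nonneg[of f]
    by (cases "esssup (lebesgue_on {0..1}) (\<lambda>x. ereal \<bar>f x\<bar>)") (auto simp: lpnorm_def)
next
  case False
  then have "esssup (lebesgue_on {0..1}) (\<lambda>x. ereal \<bar>f x\<bar>) = \<infinity>"
    by (simp add: esssup_non_measurable top_ereal_def)
  then show ?thesis using B by (simp add: lpnorm_def)
qed

lemma lpnorm_infinity_ge:
  fixes f :: "real \<Rightarrow> real"
  assumes f: "f \<in> borel_measurable (lebesgue_on {0..1})" and B: "\<And>t. t \<in> {0..1} \<Longrightarrow> \<bar>f t\<bar> \<le> B"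
    and ab: "0 \<le> a" "a < b" "b \<le> 1" and c: "\<And>t. t \<in> {a..b} \<Longrightarrow> c \<le> \<bar>f t\<bar>"
  shows "c \<le> lpnorm \<infinity> f"
proof -
  have "ereal c \<le> esssup (lebesgue_on {0..1}) (\<lambda>x. ereal \<bar>f x\<bar>)"
    using f ab c by (intro esssup_ge_of_interval) auto
  moreover have "esssup (lebesgue_on {0..1}) (\<lambda>x. ereal \<bar>f x\<bar>) \<le> ereal B"
    using f B by (intro esssup_I) (auto intro!: AE_I2)
  ultimately show ?thesis
    unfolding lpnorm_def by (cases "esssup (lebesgue_on {0..1}) (\<lambda>x. ereal \<bar>f x\<bar>)") auto
qed

section \<open>Operators dominated by a rank-one exponential kernel\<close>

text \<open>Closed forms, for \<open>\<nu> > 0\<close>, of the \<open>L^p\<close> norm of \<open>t \<mapsto> exp (\<nu> t)\<close> and of the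
  \<open>L^q\<close> norm of \<open>t \<mapsto> exp (-\<nu> t)\<close> on [0,1], where q is the exponent conjugate to p.\<close>

definition exp_Lp_norm :: "ereal \<Rightarrow> real \<Rightarrow> real" where
  "exp_Lp_norm p \<nu> = (if p = \<infinity> then exp \<nu> else
     exp \<nu> * ((1 - exp (-(real_of_ereal p) * \<nu>)) / (real_of_ereal p * \<nu>)) powr (1 / real_of_ereal p))"

definition exp_neg_Lq_norm :: "ereal \<Rightarrow> real \<Rightarrow> real" where
  "exp_neg_Lq_norm p \<nu> = (if p = \<infinity> then (1 - exp (-\<nu>)) / \<nu> else if p = 1 then 1 else
     (let q = real_of_ereal p / (real_of_ereal p - 1) in ((1 - exp (-q*\<nu>)) / (q*\<nu>)) powr (1/q)))"

lemma exp_Lp_norm_nonneg: "\<nu> > 0 \<Longrightarrow> 0 \<le> exp_Lp_norm p \<nu>"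
  unfolding exp_Lp_norm_def by simp

lemma exp_neg_Lq_norm_nonneg: "\<nu> > 0 \<Longrightarrow> 0 \<le> exp_neg_Lq_norm p \<nu>"
  unfolding exp_neg_Lq_norm_def Let_def by (auto intro!: divide_nonneg_pos)

lemma lpnorm_le_exp_bound:
  fixes f :: "real \<Rightarrow> real"
  assumes p: "1 \<le> p" and nu: "\<nu> > 0" and C: "C \<ge> 0"
    and bd: "\<And>t. t \<in> {0..1} \<Longrightarrow> \<bar>f t\<bar> \<le> C * exp (\<nu>*t)"
  shows "lpnorm p f \<le> C * exp_Lp_norm p \<nu>"
  using p
proof (cases rule: ereal_ge_1_cases)
  case 1
  have "\<bar>f t\<bar> \<le> C * exp \<nu>" if "t \<in> {0..1}" for t
  proof -
    have "exp (\<nu>*t) \<le> exp \<nu>" using that nu by (simp add: mult_left_le)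
    then show ?thesis using bd[OF that] C by (meson mult_left_mono order_trans)
  qed
  then show ?thesis using lpnorm_infinity_le[of "C * exp \<nu>" f] 1 C by (simp add: exp_Lp_norm_def)
next
  case (2 r)
  have r0: "r > 0" using 2 by simp
  define Y where "Y = (1 - exp (-r*\<nu>)) / (r*\<nu>)"
  have Y0: "0 \<le> Y" unfolding Y_def using r0 nu by (auto intro!: divide_nonneg_pos)
  have "integral\<^sup>L (lebesgue_on {0..1}) (\<lambda>t. \<bar>f t\<bar> powr r)
      \<le> integral\<^sup>L (lebesgue_on {0..1}) (\<lambda>t. C powr r * exp ((r*\<nu>)*t))"
  proof (rule integral_mono')
    show "integrable (lebesgue_on {0..1}) (\<lambda>t. C powr r * exp ((r*\<nu>)*t))"
      by (intro continuous_imp_integrable_real continuous_intros)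
    fix t assume "t \<in> space (lebesgue_on {0..1::real})"
    then have "\<bar>f t\<bar> powr r \<le> (C * exp (\<nu>*t)) powr r"
      using bd r0 by (intro powr_mono2) auto
    then show "\<bar>f t\<bar> powr r \<le> C powr r * exp ((r*\<nu>)*t)"
      using C by (simp add: powr_mult exp_powr_real mult_ac)
  qed simp
  also have "\<dots> = C powr r * ((exp (r*\<nu>) - 1) / (r*\<nu>))"
    using integral_exp_lebesgue_on_01[of "r*\<nu>"] r0 nu by simp
  also have "\<dots> = C powr r * (exp (r*\<nu>) * Y)"
    unfolding Y_def using r0 nu by (simp add: exp_minus field_simps)
  finally have I: "integral\<^sup>L (lebesgue_on {0..1}) (\<lambda>t. \<bar>f t\<bar> powr r) \<le> C powr r * (exp (r*\<nu>) * Y)" .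
  have "lpnorm p f \<le> (C powr r * (exp (r*\<nu>) * Y)) powr (1/r)"
    using 2 I r0 by (auto simp: lpnorm_def intro!: powr_mono2 integral_nonneg_AE)
  also have "\<dots> = C * (exp \<nu> * Y powr (1/r))"
    using C Y0 r0 by (simp add: powr_mult powr_powr exp_powr_real)
  finally show ?thesis using 2 by (simp add: exp_Lp_norm_def Y_def)
qed

lemma integral_mult_abs_le_esssup:
  fixes g u :: "real \<Rightarrow> real"
  assumes g: "integrable (lebesgue_on {0..1}) g" "\<And>x. x \<in> {0..1} \<Longrightarrow> 0 \<le> g x" and u: "inLp \<infinity> u"
  shows "integrable (lebesgue_on {0..1}) (\<lambda>y. g y * \<bar>u y\<bar>)"
    "integral\<^sup>L (lebesgue_on {0..1}) (\<lambda>y. g y * \<bar>u y\<bar>) \<le> integral\<^sup>L (lebesgue_on {0..1}) g * lpnorm \<infinity> u"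
proof -
  define E where "E = esssup (lebesgue_on {0..1}) (\<lambda>x. ereal \<bar>u x\<bar>)"
  have "E < \<infinity>" using u unfolding inLp_def E_def by simp
  moreover have "0 \<le> E" unfolding E_def by (rule esssup_abs_nonneg)
  ultimately have EM: "E = ereal (lpnorm \<infinity> u)" unfolding lpnorm_def E_def[symmetric] by (cases E) auto
  have "AE x in lebesgue_on {0..1}. \<bar>u x\<bar> \<le> lpnorm \<infinity> u"
    using esssup_AE[of "\<lambda>x. ereal \<bar>u x\<bar>" "lebesgue_on {0..1}"] unfolding E_def[symmetric] EM by simp
  then have ae: "AE x in lebesgue_on {0..1}. g x * \<bar>u x\<bar> \<le> g x * lpnorm \<infinity> u"
    using AE_space by eventually_elim (use g(2) in \<open>auto intro: mult_left_mono\<close>)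
  have gu: "integrable (lebesgue_on {0..1}) (\<lambda>x. g x * lpnorm \<infinity> u)" using g(1) by simp
  show i: "integrable (lebesgue_on {0..1}) (\<lambda>y. g y * \<bar>u y\<bar>)"
  proof (rule Bochner_Integration.integrable_bound[OF gu])
    show "(\<lambda>y. g y * \<bar>u y\<bar>) \<in> borel_measurable (lebesgue_on {0..1})"
      using g(1) inLp_measurable[OF u] by measurable
    show "AE x in lebesgue_on {0..1}. norm (g x * \<bar>u x\<bar>) \<le> norm (g x * lpnorm \<infinity> u)"
      using ae AE_space by eventually_elim (use g(2) lpnorm_nonneg in \<open>auto simp: abs_mult\<close>)
  qed
  show "integral\<^sup>L (lebesgue_on {0..1}) (\<lambda>y. g y * \<bar>u y\<bar>) \<le> integral\<^sup>L (lebesgue_on {0..1}) g * lpnorm \<infinity> u"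
    using integral_mono_AE[OF i gu ae] by simp
qed

lemma Holder_exp_neg:
  assumes p: "1 \<le> p" and nu: "\<nu> > 0" and u: "inLp p u"
  shows "integrable (lebesgue_on {0..1}) (\<lambda>y. exp (-\<nu>*y) * \<bar>u y\<bar>)"
    "integral\<^sup>L (lebesgue_on {0..1}) (\<lambda>y. exp (-\<nu>*y) * \<bar>u y\<bar>) \<le> exp_neg_Lq_norm p \<nu> * lpnorm p u"
proof -
  have um: "u \<in> borel_measurable (lebesgue_on {0..1})" using u by (rule inLp_measurable)
  have ei: "integrable (lebesgue_on {0..1}) (\<lambda>y. exp (-\<nu>*y))"
    by (intro continuous_imp_integrable_real continuous_intros)
  have "integrable (lebesgue_on {0..1}) (\<lambda>y. exp (-\<nu>*y) * \<bar>u y\<bar>) \<and>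
    integral\<^sup>L (lebesgue_on {0..1}) (\<lambda>y. exp (-\<nu>*y) * \<bar>u y\<bar>) \<le> exp_neg_Lq_norm p \<nu> * lpnorm p u"
    using p
  proof (cases rule: Lp_exponent_cases)
    case 1
    have "integral\<^sup>L (lebesgue_on {0..1}) (\<lambda>y. exp (-\<nu>*y)) = exp_neg_Lq_norm p \<nu>"
      using integral_exp_lebesgue_on_01[of "-\<nu>"] nu 1 by (simp add: exp_neg_Lq_norm_def field_simps)
    then show ?thesis using integral_mult_abs_le_esssup[OF ei _ u[unfolded 1]] 1 by simp
  next
    case 2
    have ui: "integrable (lebesgue_on {0..1}) (\<lambda>x. \<bar>u x\<bar>)" using u 2 by (simp add: inLp_def)
    have le: "exp (-\<nu>*x) * \<bar>u x\<bar> \<le> \<bar>u x\<bar>" if "x \<in> {0..1}" for x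
      using that nu by (simp add: mult_left_le_one_le)
    have ii: "integrable (lebesgue_on {0..1}) (\<lambda>y. exp (-\<nu>*y) * \<bar>u y\<bar>)"
      by (rule Bochner_Integration.integrable_bound[OF ui]) (use um le in \<open>auto intro!: AE_I2\<close>)
    have "integral\<^sup>L (lebesgue_on {0..1}) (\<lambda>y. exp (-\<nu>*y) * \<bar>u y\<bar>) \<le> integral\<^sup>L (lebesgue_on {0..1}) (\<lambda>y. \<bar>u y\<bar>)"
      using le by (intro integral_mono[OF ii ui]) auto
    then show ?thesis using ii 2 by (simp add: exp_neg_Lq_norm_def lpnorm_def)
  next
    case (3 r)
    define q where "q = r/(r-1)"
    have q1: "q > 1" unfolding q_def using 3 by (simp add: field_simps)
    have ur: "integrable (lebesgue_on {0..1}) (\<lambda>x. \<bar>u x\<bar> powr r)" using u 3 by (simp add: inLp_def)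
    have gq: "(\<lambda>x. exp (-\<nu>*x) powr q) = (\<lambda>x. exp ((-q*\<nu>)*x))"
      by (simp add: exp_powr_real mult_ac)
    have gi: "integrable (lebesgue_on {0..1}) (\<lambda>x. exp (-\<nu>*x) powr q)"
      unfolding gq by (intro continuous_imp_integrable_real continuous_intros)
    note H = Holder_integrable[OF 3(2) q_def _ _ _ _ ur gi] Holder_inequality_real[OF 3(2) q_def _ _ _ _ ur gi]
    have "integral\<^sup>L (lebesgue_on {0..1}) (\<lambda>x. exp (-\<nu>*x) powr q) = (1 - exp (-q*\<nu>))/(q*\<nu>)"
      unfolding gq using q1 nu integral_exp_lebesgue_on_01[of "-q*\<nu>"] by (simp add: field_simps)
    then show ?thesis
      using H um 3 by (simp add: mult.commute exp_neg_Lq_norm_def lpnorm_def q_def one_ereal_def Let_def)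
  qed
  then show "integrable (lebesgue_on {0..1}) (\<lambda>y. exp (-\<nu>*y) * \<bar>u y\<bar>)"
    "integral\<^sup>L (lebesgue_on {0..1}) (\<lambda>y. exp (-\<nu>*y) * \<bar>u y\<bar>) \<le> exp_neg_Lq_norm p \<nu> * lpnorm p u" by auto
qed

lemma abs_integral_le_exp_weighted:
  fixes F u :: "real \<Rightarrow> real"
  assumes "integrable (lebesgue_on {0..1}) (\<lambda>y. exp (-\<nu>*y) * \<bar>u y\<bar>)" "C \<ge> 0"
    and "\<And>y. y \<in> {0..1} \<Longrightarrow> \<bar>F y\<bar> \<le> C * (exp (-\<nu>*y) * \<bar>u y\<bar>)"
  shows "\<bar>integral\<^sup>L (lebesgue_on {0..1}) F\<bar> \<le> C * integral\<^sup>L (lebesgue_on {0..1}) (\<lambda>y. exp (-\<nu>*y) * \<bar>u y\<bar>)"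
proof -
  have "\<bar>integral\<^sup>L (lebesgue_on {0..1}) F\<bar> \<le> integral\<^sup>L (lebesgue_on {0..1}) (\<lambda>y. \<bar>F y\<bar>)"
    by (rule integral_abs_bound)
  also have "\<dots> \<le> integral\<^sup>L (lebesgue_on {0..1}) (\<lambda>y. C * (exp (-\<nu>*y) * \<bar>u y\<bar>))"
    by (rule integral_mono') (use assms in auto)
  finally show ?thesis by simp
qed

lemma Lp_bounded_by_exp_kernel:
  assumes p: "1 \<le> p" and nu: "\<nu> > 0" and E: "E \<ge> 0"
    and bd: "\<And>u t. inLp p u \<Longrightarrow> t \<in> {0..1} \<Longrightarrow>
       \<bar>T u t\<bar> \<le> E * exp (\<nu>*t) * integral\<^sup>L (lebesgue_on {0..1}) (\<lambda>y. exp (-\<nu>*y) * \<bar>u y\<bar>)"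
  shows "Lp_bounded_by p T (E * (exp_Lp_norm p \<nu> * exp_neg_Lq_norm p \<nu>))"
  unfolding Lp_bounded_by_def
proof (intro allI impI)
  fix u assume u: "inLp p u" and u1: "lpnorm p u \<le> 1"
  define I where "I = integral\<^sup>L (lebesgue_on {0..1}) (\<lambda>y. exp (-\<nu>*y) * \<bar>u y\<bar>)"
  have I0: "0 \<le> I" unfolding I_def by (intro integral_nonneg_AE AE_I2) simp
  have "I \<le> exp_neg_Lq_norm p \<nu> * lpnorm p u" unfolding I_def by (rule Holder_exp_neg(2)[OF p nu u])
  also have "\<dots> \<le> exp_neg_Lq_norm p \<nu>"
    using u1 exp_neg_Lq_norm_nonneg[OF nu] by (simp add: mult_left_le)
  finally have I1: "I \<le> exp_neg_Lq_norm p \<nu>" .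
  have "lpnorm p (T u) \<le> (E * I) * exp_Lp_norm p \<nu>"
    by (rule lpnorm_le_exp_bound[OF p nu]) (use E I0 bd[OF u] in \<open>auto simp: I_def mult_ac\<close>)
  also have "\<dots> \<le> (E * exp_neg_Lq_norm p \<nu>) * exp_Lp_norm p \<nu>"
    using I1 E exp_Lp_norm_nonneg[OF nu] by (intro mult_right_mono mult_left_mono) auto
  finally show "lpnorm p (T u) \<le> E * (exp_Lp_norm p \<nu> * exp_neg_Lq_norm p \<nu>)" by (simp add: mult_ac)
qed

lemma Cp_pos: "1 \<le> p \<Longrightarrow> Cp p > 0"
  unfolding Cp_def Let_def by (cases p) (auto intro!: divide_pos_pos mult_pos_pos)

lemma Cp_ereal_eq:
  assumes r: "r > 1"
  shows "Cp (ereal r) = (1/(r-1)) powr (1/r) / (1 + 1/(r-1))"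
proof -
  define q where "q = r/(r-1)"
  have q0: "q > 0" and r0: "r > 0" using r by (auto simp: q_def)
  have "1/r - 1 = -(1/q)" unfolding q_def using r by (simp add: field_simps)
  then have "q powr (1/r) / q = 1 / q powr (1/q)"
    using q0 powr_diff[of q "1/r" 1] by (simp add: powr_minus_divide)
  have "1/(r-1) = q/r" "1 + 1/(r-1) = q" unfolding q_def using r by (auto simp: field_simps)
  then have "(1/(r-1)) powr (1/r) / (1 + 1/(r-1)) = q powr (1/r) / r powr (1/r) / q"
    using q0 r0 by (simp add: powr_divide)
  also have "\<dots> = (q powr (1/r) / q) / r powr (1/r)" by simp
  finally have "(1/(r-1)) powr (1/r) / (1 + 1/(r-1)) = 1 / (r powr (1/r) * q powr (1/q))"
    unfolding \<open>q powr (1/r) / q = 1 / q powr (1/q)\<close> by simp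
  moreover have "Cp (ereal r) = 1 / (r powr (1/r) * q powr (1/q))"
    using r unfolding Cp_def q_def by (simp add: one_ereal_def Let_def)
  ultimately show ?thesis by simp
qed

lemma exp_norms_product_tendsto_Cp:
  assumes p: "1 \<le> p"
  shows "((\<lambda>\<nu>. exp_Lp_norm p \<nu> * exp_neg_Lq_norm p \<nu> * \<nu> * exp (-\<nu>)) \<longlongrightarrow> Cp p) at_top"
proof -
  consider "p = \<infinity> \<or> p = 1" | r where "p = ereal r" "r > 1"
    using Lp_exponent_cases[OF p] by metis
  then show ?thesis
  proof cases
    case 1
    have "\<forall>\<^sub>F \<nu> in at_top. 1 - exp (-\<nu>) = exp_Lp_norm p \<nu> * exp_neg_Lq_norm p \<nu> * \<nu> * exp (-\<nu>)"
      using eventually_gt_at_top[of "0::real"]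
      by eventually_elim (use 1 in \<open>auto simp: exp_Lp_norm_def exp_neg_Lq_norm_def field_simps exp_minus\<close>)
    moreover have "((\<lambda>\<nu>::real. 1 - exp (-\<nu>)) \<longlongrightarrow> 1) at_top" by real_asymp
    ultimately show ?thesis using 1 by (auto simp: Cp_def intro: Lim_transform_eventually)
  next
    case 2
    define r where "r = real_of_ereal p"
    define q where "q = r/(r-1)"
    have r1: "r > 1" and q1: "q > 1" unfolding r_def q_def using 2 by (auto simp: field_simps)
    have rq: "1/r + 1/q = 1" unfolding q_def using r1 by (simp add: field_simps)
    define K where "K = r powr (1/r) * q powr (1/q)"
    have "Cp p = 1 / K" using 2 r1 unfolding Cp_def K_def q_def r_def by (auto simp: one_ereal_def Let_def)
    moreover have "\<forall>\<^sub>F \<nu> in at_top. (1 - exp (-r*\<nu>)) powr (1/r) * (1 - exp (-q*\<nu>)) powr (1/q) / K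
        = exp_Lp_norm p \<nu> * exp_neg_Lq_norm p \<nu> * \<nu> * exp (-\<nu>)"
      using eventually_gt_at_top[of "0::real"]
    proof eventually_elim
      case (elim \<nu>)
      have A: "exp_Lp_norm p \<nu> = exp \<nu> * ((1 - exp (-r*\<nu>)) powr (1/r) / (r powr (1/r) * \<nu> powr (1/r)))"
        using 2 r1 elim by (simp add: exp_Lp_norm_def r_def powr_divide powr_mult)
      have B: "exp_neg_Lq_norm p \<nu> = (1 - exp (-q*\<nu>)) powr (1/q) / (q powr (1/q) * \<nu> powr (1/q))"
        using 2 r1 q1 elim by (simp add: exp_neg_Lq_norm_def Let_def r_def q_def one_ereal_def powr_divide powr_mult)
      have "exp_Lp_norm p \<nu> * exp_neg_Lq_norm p \<nu> * \<nu> * exp (-\<nu>) =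
          (1 - exp (-r*\<nu>)) powr (1/r) * (1 - exp (-q*\<nu>)) powr (1/q) / K
          * (\<nu> / (\<nu> powr (1/r) * \<nu> powr (1/q))) * (exp \<nu> * exp (-\<nu>))"
        unfolding A B K_def by (simp add: field_simps)
      moreover have "\<nu> powr (1/r) * \<nu> powr (1/q) = \<nu>"
        using elim rq by (simp add: powr_add[symmetric])
      ultimately show ?case using elim by (simp add: exp_minus)
    qed
    moreover have "((\<lambda>\<nu>. (1 - exp (-r*\<nu>)) powr (1/r) * (1 - exp (-q*\<nu>)) powr (1/q) / K) \<longlongrightarrow> 1 powr (1/r) * 1 powr (1/q) / K) at_top"
      using r1 q1 by (intro tendsto_intros) (real_asymp, simp, real_asymp, auto simp: K_def)
    ultimately show ?thesis by (auto intro: Lim_transform_eventually)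
  qed
qed

section \<open>The kernel of \<open>V_k^n\<close>\<close>

lemma powr_le_exp_mult_minus_1:
  fixes N x :: real
  assumes "N \<ge> 0" "x \<ge> 0"
  shows "x powr N \<le> exp (N*(x-1))"
proof (cases "x = 0")
  case False
  then have x: "x > 0" using assms by simp
  have "N * ln x \<le> N * (x-1)" using assms ln_le_minus_one[OF x] by (intro mult_left_mono) auto
  then show ?thesis using x by (simp add: powr_def mult.commute)
qed simp

lemma exp_le_on_lower_half:
  fixes N x :: real
  assumes N: "N > 0" and x: "x \<le> 1/2"
  shows "exp (N*(x-1)) \<le> (32/N) * exp ((N/2)*(x-1))"
proof -
  have "(N/2)*(x-1) \<le> -(N/4)" using x N by (simp add: field_simps)
  then have "exp ((N/2)*(x-1)) \<le> exp (-(N/4))" by simp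
  also have "\<dots> \<le> 4/N"
    using exp_ge_add_one_self[of "N/4"] N by (simp add: exp_minus field_simps)
  also have "\<dots> \<le> 32/N" using N by (simp add: field_simps)
  finally have "exp ((N/2)*(x-1)) \<le> 32/N" .
  have "exp (N*(x-1)) = exp ((N/2)*(x-1)) * exp ((N/2)*(x-1))"
    by (simp flip: exp_add)
  also have "\<dots> \<le> (32/N) * exp ((N/2)*(x-1))"
    using \<open>exp ((N/2)*(x-1)) \<le> 32/N\<close> by (intro mult_right_mono) auto
  finally show ?thesis .
qed

lemma exp_minus_powr_le_on_upper_half:
  fixes N x :: real
  assumes N: "N > 0" and x: "1/2 \<le> x" "x \<le> 1"
  shows "exp (N*(x-1)) - x powr N \<le> (32/N) * exp ((N/2)*(x-1))"
proof -
  define y where "y = 1 - x"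
  have y: "0 \<le> y" "y \<le> 1/2" using x unfolding y_def by auto
  define h where "h = x - 1 - ln x"
  have h: "h \<le> 2*y^2" using ln_one_minus_pos_lower_bound[OF y] unfolding h_def y_def by simp
  have "x powr N = exp (N*(x-1)) * exp (-(N*h))"
    using x by (simp add: powr_def h_def exp_add[symmetric] algebra_simps)
  then have "exp (N*(x-1)) - x powr N = exp (N*(x-1)) * (1 - exp (-(N*h)))"
    by (simp add: algebra_simps)
  also have "\<dots> \<le> exp (N*(x-1)) * (2*N*y^2)"
  proof -
    have "N*h \<le> N*(2*y^2)" using h N by (intro mult_left_mono) auto
    then show ?thesis using exp_ge_add_one_self[of "-(N*h)"] by (intro mult_left_mono) auto
  qed
  also have "\<dots> = exp ((N/2)*(x-1)) * ((8/N) * ((N*y/2)^2 * exp (-(N*y/2))))"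
  proof -
    have "exp (N*(x-1)) = exp ((N/2)*(x-1)) * exp (-(N*y/2))"
      by (simp add: y_def field_simps flip: exp_add)
    then show ?thesis using N by (simp add: power2_eq_square field_simps)
  qed
  also have "\<dots> \<le> exp ((N/2)*(x-1)) * (32/N)"
  proof -
    \<comment> \<open>\<open>z^2 \<le> 4 exp z\<close> for \<open>z \<ge> 0\<close>, from \<open>z/2 \<le> exp (z/2)\<close>\<close>
    have "N*y/4 \<le> exp (N*y/4)" using exp_ge_add_one_self[of "N*y/4"] by linarith
    then have "(N*y/4)^2 \<le> (exp (N*y/4))^2" using y N by (intro power_mono) auto
    then have "(N*y/2)^2 \<le> 4 * exp (N*y/2)"
      by (simp add: power2_eq_square exp_add[symmetric] field_simps)
    then have "(N*y/2)^2 * exp (-(N*y/2)) \<le> 4"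
      by (simp add: exp_minus field_simps)
    then show ?thesis using N by (intro mult_left_mono) (auto simp: field_simps)
  qed
  finally show ?thesis by (simp add: mult_ac)
qed

lemma abs_powr_minus_exp_le:
  fixes N x :: real
  assumes N: "N \<ge> 2" and x: "x \<le> 1"
  shows "\<bar>(if x \<ge> 0 then x powr N else 0) - exp (N*(x-1))\<bar> \<le> (32/N) * exp ((N/2)*(x-1))"
proof (cases "x \<le> 1/2")
  case True
  define k where "k = (if x \<ge> 0 then x powr N else 0)"
  have "0 \<le> k" "k \<le> exp (N*(x-1))" unfolding k_def using powr_le_exp_mult_minus_1[of N x] N by auto
  moreover have "exp (N*(x-1)) \<le> (32/N) * exp ((N/2)*(x-1))"
    by (rule exp_le_on_lower_half) (use N True in auto)
  ultimately show ?thesis unfolding k_def[symmetric] by (simp only: abs_le_iff) (intro conjI; linarith)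
next
  case False
  have "x powr N \<le> exp (N*(x-1))" using powr_le_exp_mult_minus_1[of N x] N False by simp
  moreover have "exp (N*(x-1)) - x powr N \<le> (32/N) * exp ((N/2)*(x-1))"
    by (rule exp_minus_powr_le_on_upper_half) (use N x False in auto)
  ultimately have "\<bar>x powr N - exp (N*(x-1))\<bar> \<le> (32/N) * exp ((N/2)*(x-1))"
    by (subst abs_of_nonpos) linarith+
  then show ?thesis using False by simp
qed

lemma powr_exp_ge_near_1:
  fixes n x \<mu> \<delta> :: real
  assumes d: "0 < \<delta>" "\<delta> \<le> 1/4" and n: "n \<ge> 1" and x: "1 - 2*\<delta> \<le> x" "x \<le> 1"
  shows "exp (((n-1)/(1-2*\<delta>))*(x-1)) * exp (\<mu> - 2*\<delta>*\<bar>\<mu>\<bar>) \<le> x powr (n-1) * exp (\<mu>*x)"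
proof -
  have x0: "x > 0" and dd: "1 - 2*\<delta> > 0" using d x by auto
  have "ln (1/x) \<le> 1/x - 1" using x0 by (intro ln_le_minus_one) simp
  then have "(x-1)/x \<le> ln x" using x0 by (simp add: ln_div field_simps)
  moreover have "(x-1)/(1-2*\<delta>) \<le> (x-1)/x"
    using x dd x0 by (intro divide_left_mono_neg) (auto intro: mult_pos_pos)
  ultimately have "(n-1) * ((x-1)/(1-2*\<delta>)) \<le> (n-1) * ln x"
    using n by (intro mult_left_mono) auto
  then have "exp (((n-1)/(1-2*\<delta>))*(x-1)) \<le> x powr (n-1)"
    using x0 by (simp add: powr_def mult.commute)
  moreover have "\<mu> - 2*\<delta>*\<bar>\<mu>\<bar> \<le> \<mu>*x"
  proof -
    have "\<bar>\<mu>*(x-1)\<bar> \<le> \<bar>\<mu>\<bar> * (2*\<delta>)"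
      using x d by (simp add: abs_mult) (intro mult_left_mono, auto)
    then show ?thesis by (simp add: abs_le_iff algebra_simps)
  qed
  ultimately show ?thesis by (intro mult_mono) auto
qed

lemma exp_mult_diff: "exp (a * (t - y)) = exp (a * t) * exp (-a * y)" for a t y :: real
  by (simp add: right_diff_distrib exp_diff exp_minus field_simps)

definition Vk_kernel :: "real \<Rightarrow> real \<Rightarrow> real \<Rightarrow> real" where
  "Vk_kernel \<mu> n x = (if 0 \<le> x then x powr (n - 1) * exp (\<mu> * x) / Gamma n else 0)"

lemma Vk_kernel_measurable [measurable]: "Vk_kernel \<mu> n \<in> borel_measurable borel"
  unfolding Vk_kernel_def by measurable

lemma Vk_eq_integral_kernel:
  assumes "t \<in> {0..1}"
  shows "Vk \<mu> n u t = integral\<^sup>L (lebesgue_on {0..1}) (\<lambda>y. Vk_kernel \<mu> n (t - y) * u y)"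
proof -
  have "Vk \<mu> n u t = integral\<^sup>L (lebesgue_on {0..1})
      (\<lambda>y. indicator {0..t} y * ((t - y) powr (n - 1) * exp (\<mu> * (t - y)) / Gamma n * u y))"
    unfolding Vk_def using assms by (simp add: integral_lebesgue_on_01_indicator)
  also have "\<dots> = integral\<^sup>L (lebesgue_on {0..1}) (\<lambda>y. Vk_kernel \<mu> n (t - y) * u y)"
    by (intro Bochner_Integration.integral_cong) (auto simp: Vk_kernel_def indicator_def)
  finally show ?thesis .
qed

lemma Sop_eq_integral: "Sop la u t = integral\<^sup>L (lebesgue_on {0..1}) (\<lambda>y. exp (la * (t - y)) * u y)"
  unfolding Sop_def by (rule set_integral_eq_integral_lebesgue_on)

lemma Vk_kernel_nonneg: "n > 0 \<Longrightarrow> 0 \<le> Vk_kernel \<mu> n x"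
  unfolding Vk_kernel_def by simp

lemma Vk_kernel_le:
  assumes n: "n \<ge> 1"
  shows "Vk_kernel \<mu> n x \<le> exp (-(n-1)) / Gamma n * exp ((n-1+\<mu>) * x)"
proof (cases "x \<ge> 0")
  case True
  have "x powr (n-1) * exp (\<mu>*x) \<le> exp ((n-1)*(x-1)) * exp (\<mu>*x)"
    using powr_le_exp_mult_minus_1[of "n-1" x] n True by (intro mult_right_mono) auto
  also have "\<dots> = exp (-(n-1)) * exp ((n-1+\<mu>) * x)"
    by (simp add: algebra_simps flip: exp_add)
  finally show ?thesis using True n by (simp add: Vk_kernel_def divide_right_mono)
qed (use n in \<open>simp add: Vk_kernel_def\<close>)

lemma abs_Vk_kernel_minus_exp_le:
  assumes n: "n \<ge> 3" and x: "\<bar>x\<bar> \<le> 1"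
  shows "\<bar>Vk_kernel \<mu> n x - exp (-(n-1)) / Gamma n * exp ((n-1+\<mu>) * x)\<bar>
    \<le> 32 * exp \<bar>\<mu>\<bar> * exp (-((n-1)/2)) / ((n-1) * Gamma n) * exp ((n-1)/2 * x)"
proof -
  define N where "N = n - 1"
  have G: "Gamma n > 0" using n by simp
  have "Vk_kernel \<mu> n x - exp (-(n-1)) / Gamma n * exp ((n-1+\<mu>) * x)
      = exp (\<mu>*x) / Gamma n * ((if x \<ge> 0 then x powr N else 0) - exp (N*(x-1)))"
    by (simp add: Vk_kernel_def N_def algebra_simps flip: exp_add)
  also have "\<bar>\<dots>\<bar> = exp (\<mu>*x) / Gamma n * \<bar>(if x \<ge> 0 then x powr N else 0) - exp (N*(x-1))\<bar>"
    using G by (simp add: abs_mult)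
  also have "\<dots> \<le> exp \<bar>\<mu>\<bar> / Gamma n * ((32/N) * exp ((N/2)*(x-1)))"
  proof (intro mult_mono)
    have "\<mu>*x \<le> \<bar>\<mu>\<bar>" using x abs_ge_self[of "\<mu>*x"] mult_left_mono[OF x, of "\<bar>\<mu>\<bar>"] by (simp add: abs_mult)
    then show "exp (\<mu>*x) / Gamma n \<le> exp \<bar>\<mu>\<bar> / Gamma n" using G by (simp add: divide_right_mono)
    show "\<bar>(if x \<ge> 0 then x powr N else 0) - exp (N*(x-1))\<bar> \<le> (32/N) * exp ((N/2)*(x-1))"
      using x n by (intro abs_powr_minus_exp_le) (auto simp: N_def)
  qed (use G in auto)
  also have "\<dots> = 32 * exp \<bar>\<mu>\<bar> * exp (-((n-1)/2)) / ((n-1) * Gamma n) * exp ((n-1)/2 * x)"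
    by (simp add: N_def field_simps flip: exp_add)
  finally show ?thesis .
qed

lemma Vk_kernel_ge:
  assumes d: "0 < \<delta>" "\<delta> \<le> 1/4" and n: "n \<ge> 1" and x: "1 - 2*\<delta> \<le> x" "x \<le> 1"
  shows "exp (\<mu> - 2*\<delta>*\<bar>\<mu>\<bar>) / Gamma n * exp ((n-1)/(1-2*\<delta>) * (x-1)) \<le> Vk_kernel \<mu> n x"
  using powr_exp_ge_near_1[OF assms, of \<mu>] d x n
  by (simp add: Vk_kernel_def divide_right_mono mult.commute)

section \<open>Upper bounds for \<open>V_k^n\<close>\<close>

lemma abs_Vk_integrand_le:
  assumes "n \<ge> 1"
  shows "\<bar>Vk_kernel \<mu> n (t - y) * u y\<bar>
    \<le> exp (-(n-1)) / Gamma n * exp ((n-1+\<mu>)*t) * (exp (-(n-1+\<mu>)*y) * \<bar>u y\<bar>)"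
proof -
  have "\<bar>Vk_kernel \<mu> n (t - y) * u y\<bar> = Vk_kernel \<mu> n (t - y) * \<bar>u y\<bar>"
    using Vk_kernel_nonneg[of n \<mu> "t - y"] assms by (simp add: abs_mult)
  also have "\<dots> \<le> exp (-(n-1)) / Gamma n * exp ((n-1+\<mu>) * (t - y)) * \<bar>u y\<bar>"
    using Vk_kernel_le[OF assms] by (intro mult_right_mono) auto
  finally show ?thesis unfolding exp_mult_diff by (simp add: mult_ac)
qed

lemma Vk_integrand_integrable:
  assumes n: "n \<ge> 1" and u: "u \<in> borel_measurable (lebesgue_on {0..1})"
    and ui: "integrable (lebesgue_on {0..1}) (\<lambda>y. exp (-(n-1+\<mu>)*y) * \<bar>u y\<bar>)"
  shows "integrable (lebesgue_on {0..1}) (\<lambda>y. Vk_kernel \<mu> n (t - y) * u y)"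
proof (rule Bochner_Integration.integrable_bound)
  show "integrable (lebesgue_on {0..1})
      (\<lambda>y. exp (-(n-1)) / Gamma n * exp ((n-1+\<mu>)*t) * (exp (-(n-1+\<mu>)*y) * \<bar>u y\<bar>))"
    using ui by simp
  show "(\<lambda>y. Vk_kernel \<mu> n (t - y) * u y) \<in> borel_measurable (lebesgue_on {0..1})"
    using u by measurable
  show "AE y in lebesgue_on {0..1}. norm (Vk_kernel \<mu> n (t - y) * u y)
      \<le> norm (exp (-(n-1)) / Gamma n * exp ((n-1+\<mu>)*t) * (exp (-(n-1+\<mu>)*y) * \<bar>u y\<bar>))"
    using abs_Vk_integrand_le[OF n] n by (intro AE_I2) (simp add: abs_mult)
qed

lemma abs_Vk_le:
  assumes n: "n \<ge> 1" and t: "t \<in> {0..1}"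
    and ui: "integrable (lebesgue_on {0..1}) (\<lambda>y. exp (-(n-1+\<mu>)*y) * \<bar>u y\<bar>)"
  shows "\<bar>Vk \<mu> n u t\<bar> \<le> exp (-(n-1)) / Gamma n * exp ((n-1+\<mu>)*t) *
    integral\<^sup>L (lebesgue_on {0..1}) (\<lambda>y. exp (-(n-1+\<mu>)*y) * \<bar>u y\<bar>)"
  unfolding Vk_eq_integral_kernel[OF t]
  using n by (intro abs_integral_le_exp_weighted[OF ui] abs_Vk_integrand_le) auto

lemma Vk_bounded:
  assumes n: "n \<ge> 1" and ui: "integrable (lebesgue_on {0..1}) (\<lambda>y. exp (-(n-1+\<mu>)*y) * \<bar>u y\<bar>)"
  obtains B where "\<And>t. t \<in> {0..1} \<Longrightarrow> \<bar>Vk \<mu> n u t\<bar> \<le> B"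
proof
  fix t :: real assume t: "t \<in> {0..1}"
  define I where "I = integral\<^sup>L (lebesgue_on {0..1}) (\<lambda>y. exp (-(n-1+\<mu>)*y) * \<bar>u y\<bar>)"
  have I0: "0 \<le> I" unfolding I_def by (intro integral_nonneg_AE AE_I2) simp
  have "(n-1+\<mu>)*t \<le> \<bar>n-1+\<mu>\<bar>"
    using t mult_left_mono[of t 1 "\<bar>n-1+\<mu>\<bar>"] abs_ge_self[of "(n-1+\<mu>)*t"] by (auto simp: abs_mult)
  then have "exp (-(n-1)) / Gamma n * exp ((n-1+\<mu>)*t) * I \<le> exp (-(n-1)) / Gamma n * exp \<bar>n-1+\<mu>\<bar> * I"
    using I0 n by (intro mult_right_mono mult_left_mono) auto
  then show "\<bar>Vk \<mu> n u t\<bar> \<le> exp (-(n-1)) / Gamma n * exp \<bar>n-1+\<mu>\<bar> * I"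
    using abs_Vk_le[OF n t ui] unfolding I_def by linarith
qed

lemma abs_Vk_minus_Sop_le:
  assumes n: "n \<ge> 3" and t: "t \<in> {0..1}" and u: "u \<in> borel_measurable (lebesgue_on {0..1})"
    and ui: "integrable (lebesgue_on {0..1}) (\<lambda>y. exp (-(n-1+\<mu>)*y) * \<bar>u y\<bar>)"
    and ui': "integrable (lebesgue_on {0..1}) (\<lambda>y. exp (-((n-1)/2)*y) * \<bar>u y\<bar>)"
  shows "\<bar>Vk \<mu> n u t - exp (-(n-1)) / Gamma n * Sop (n-1+\<mu>) u t\<bar> \<le>
    32 * exp \<bar>\<mu>\<bar> * exp (-((n-1)/2)) / ((n-1) * Gamma n) * exp ((n-1)/2 * t) *
     integral\<^sup>L (lebesgue_on {0..1}) (\<lambda>y. exp (-((n-1)/2)*y) * \<bar>u y\<bar>)"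
proof -
  define c where "c = exp (-(n-1)) / Gamma n"
  define l where "l = n - 1 + \<mu>"
  define E where "E = 32 * exp \<bar>\<mu>\<bar> * exp (-((n-1)/2)) / ((n-1) * Gamma n)"
  have c0: "c \<ge> 0" and E0: "E \<ge> 0" using n by (auto simp: c_def E_def intro!: divide_nonneg_pos)
  have i1: "integrable (lebesgue_on {0..1}) (\<lambda>y. Vk_kernel \<mu> n (t - y) * u y)"
    using n u ui by (intro Vk_integrand_integrable) auto
  have i2: "integrable (lebesgue_on {0..1}) (\<lambda>y. c * (exp (l*(t-y)) * u y))"
  proof (rule Bochner_Integration.integrable_bound)
    show "integrable (lebesgue_on {0..1}) (\<lambda>y. c * exp (l*t) * (exp (-l*y) * \<bar>u y\<bar>))"
      using ui by (simp add: l_def)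
    show "(\<lambda>y. c * (exp (l*(t-y)) * u y)) \<in> borel_measurable (lebesgue_on {0..1})"
      using u by measurable
    show "AE y in lebesgue_on {0..1}. norm (c * (exp (l*(t-y)) * u y)) \<le> norm (c * exp (l*t) * (exp (-l*y) * \<bar>u y\<bar>))"
      using c0 unfolding exp_mult_diff by (intro AE_I2) (simp add: abs_mult mult_ac)
  qed
  have "Vk \<mu> n u t - c * Sop l u t
      = integral\<^sup>L (lebesgue_on {0..1}) (\<lambda>y. Vk_kernel \<mu> n (t - y) * u y - c * (exp (l*(t-y)) * u y))"
    using i1 i2 by (simp add: Vk_eq_integral_kernel[OF t] Sop_eq_integral)
  also have "\<bar>\<dots>\<bar> \<le> E * exp ((n-1)/2 * t) * integral\<^sup>L (lebesgue_on {0..1}) (\<lambda>y. exp (-((n-1)/2)*y) * \<bar>u y\<bar>)"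
  proof (rule abs_integral_le_exp_weighted[OF ui'])
    fix y :: real assume y: "y \<in> {0..1}"
    have "\<bar>Vk_kernel \<mu> n (t - y) * u y - c * (exp (l*(t-y)) * u y)\<bar>
        = \<bar>Vk_kernel \<mu> n (t - y) - c * exp (l*(t-y))\<bar> * \<bar>u y\<bar>"
      by (simp add: abs_mult[symmetric] algebra_simps)
    also have "\<dots> \<le> E * exp ((n-1)/2 * (t - y)) * \<bar>u y\<bar>"
      using abs_Vk_kernel_minus_exp_le[OF n, of "t - y" \<mu>] t y
      by (intro mult_right_mono) (auto simp: c_def l_def E_def)
    finally show "\<bar>Vk_kernel \<mu> n (t - y) * u y - c * (exp (l*(t-y)) * u y)\<bar>
        \<le> E * exp ((n-1)/2 * t) * (exp (-((n-1)/2)*y) * \<bar>u y\<bar>)"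
      unfolding exp_mult_diff by (simp add: mult_ac)
  qed (use E0 in simp)
  finally show ?thesis unfolding c_def l_def E_def .
qed

lemma Vk_Lp_bounded:
  assumes p: "1 \<le> p" and n: "n \<ge> 1" and l: "n - 1 + \<mu> > 0"
  shows "Lp_bounded_by p (Vk \<mu> n)
    (exp (-(n-1)) / Gamma n * (exp_Lp_norm p (n-1+\<mu>) * exp_neg_Lq_norm p (n-1+\<mu>)))"
  using n by (intro Lp_bounded_by_exp_kernel[OF p l] abs_Vk_le Holder_exp_neg(1)[OF p l]) auto

lemma Vk_minus_Sop_Lp_bounded:
  assumes p: "1 \<le> p" and n: "n \<ge> 3" and l: "n - 1 + \<mu> > 0"
  shows "Lp_bounded_by p (\<lambda>u t. Vk \<mu> n u t - exp (-(n-1)) / Gamma n * Sop (n-1+\<mu>) u t)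
    (32 * exp \<bar>\<mu>\<bar> * exp (-((n-1)/2)) / ((n-1) * Gamma n) *
      (exp_Lp_norm p ((n-1)/2) * exp_neg_Lq_norm p ((n-1)/2)))"
proof -
  have \<nu>: "(n-1)/2 > 0" using n by simp
  show ?thesis
    using n
    by (intro Lp_bounded_by_exp_kernel[OF p \<nu>] abs_Vk_minus_Sop_le inLp_measurable
        Holder_exp_neg(1)[OF p l] Holder_exp_neg(1)[OF p \<nu>]) (auto intro!: divide_nonneg_pos)
qed

lemma Vk_measurable:
  assumes [measurable]: "u \<in> borel_measurable borel"
  shows "Vk \<mu> n u \<in> borel_measurable (lebesgue_on {0..1})"
proof -
  define H where "H t y = indicator {0..t} y * ((t - y) powr (n - 1) * exp (\<mu> * (t - y)) / Gamma n * u y)"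
    for t y :: real
  have Hm: "(\<lambda>(t, y). H t y) \<in> borel_measurable (borel \<Otimes>\<^sub>M lborel)"
  proof -
    have "Measurable.pred (borel \<Otimes>\<^sub>M lborel) (\<lambda>(t, y). y \<in> {0..t::real})"
      by (simp add: split_beta) measurable
    then show ?thesis unfolding H_def indicator_def by (simp add: split_beta) measurable
  qed
  have eq: "Vk \<mu> n u t = integral\<^sup>L lborel (H t)" for t
  proof -
    have "Vk \<mu> n u t = integral\<^sup>L lebesgue (H t)"
      unfolding Vk_def set_lebesgue_integral_def H_def by simp
    also have "\<dots> = integral\<^sup>L lborel (H t)"
      by (rule integral_completion) (use Hm in measurable)
    finally show ?thesis .
  qed
  have "(\<lambda>t. integral\<^sup>L lborel (H t)) \<in> borel_measurable borel"
    using Hm by (rule lborel.borel_measurable_lebesgue_integral)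
  then show ?thesis unfolding eq[abs_def]
    by (intro measurable_restrict_space1 measurable_completion) simp
qed

section \<open>Lower bounds for \<open>\<parallel>V_k^n\<parallel>\<close>\<close>

lemma lpnorm_exp:
  assumes p: "p = ereal r" "r > 0" and c: "c \<ge> 0" and a: "a \<noteq> 0"
  shows "inLp p (\<lambda>y. c * exp (a*y))" "lpnorm p (\<lambda>y. c * exp (a*y)) = c * ((exp (r*a) - 1) / (r*a)) powr (1/r)"
proof -
  have pw: "(\<lambda>y. \<bar>c * exp (a*y)\<bar> powr r) = (\<lambda>y. c powr r * exp ((r*a)*y))"
    using c by (auto simp: powr_mult exp_powr_real mult_ac)
  have "(\<lambda>y. c * exp (a*y)) \<in> borel_measurable (lebesgue_on {0..1})" by measurable
  moreover have "integrable (lebesgue_on {0..1}) (\<lambda>y. \<bar>c * exp (a*y)\<bar> powr r)"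
    unfolding pw by (intro continuous_imp_integrable_real continuous_intros)
  ultimately show "inLp p (\<lambda>y. c * exp (a*y))" unfolding inLp_def using p by simp
  define Q where "Q = (exp (r*a) - 1) / (r*a)"
  have Q0: "0 < Q"
    using a p by (auto simp: Q_def zero_less_divide_iff zero_less_mult_iff mult_less_0_iff linorder_neq_iff)
  have I: "integral\<^sup>L (lebesgue_on {0..1}) (\<lambda>y. c powr r * exp ((r*a)*y)) = c powr r * Q"
    using integral_exp_lebesgue_on_01[of "r*a"] p a by (simp add: Q_def)
  have "lpnorm p (\<lambda>y. c * exp (a*y)) = (c powr r * Q) powr (1/r)"
    unfolding lpnorm_def p(1) real_of_ereal.simps(1) pw I by simp
  then show "lpnorm p (\<lambda>y. c * exp (a*y)) = c * ((exp (r*a) - 1) / (r*a)) powr (1/r)"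
    using Q0 p c unfolding Q_def[symmetric] by (simp add: powr_mult powr_powr)
qed

lemma lpnorm_ge_exp_tail:
  fixes f :: "real \<Rightarrow> real"
  assumes p: "p = ereal r" "r > 0" and f: "f \<in> borel_measurable (lebesgue_on {0..1})"
    and B: "\<And>t. t \<in> {0..1} \<Longrightarrow> \<bar>f t\<bar> \<le> B"
    and d: "0 \<le> \<delta>" "\<delta> \<le> 1" and m: "m > 0" and C: "C \<ge> 0"
    and tail: "\<And>t. t \<in> {1-\<delta>..1} \<Longrightarrow> C * exp (m*(t-1)) \<le> \<bar>f t\<bar>"
  shows "C * ((1 - exp (-(r*m)*\<delta>)) / (r*m)) powr (1/r) \<le> lpnorm p f"
proof -
  define Z where "Z = (1 - exp (-(r*m)*\<delta>)) / (r*m)"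
  have Z0: "Z \<ge> 0" unfolding Z_def using p m d by (auto intro!: divide_nonneg_pos)
  define g where "g t = indicator {1-\<delta>..1} t * (C powr r * exp ((r*m)*(t-1)))" for t
  have fi: "integrable (lebesgue_on {0..1}) (\<lambda>t. \<bar>f t\<bar> powr r)"
  proof (rule Bochner_Integration.integrable_bound)
    show "integrable (lebesgue_on {0..1::real}) (\<lambda>t. B powr r)"
      by (intro continuous_imp_integrable_real continuous_intros)
    show "(\<lambda>t. \<bar>f t\<bar> powr r) \<in> borel_measurable (lebesgue_on {0..1})"
      using f by measurable
    show "AE t in lebesgue_on {0..1}. norm (\<bar>f t\<bar> powr r) \<le> norm (B powr r)"
      using B p by (intro AE_I2) (simp add: powr_mono2)
  qed
  have "integral\<^sup>L (lebesgue_on {0..1}) g = (LINT t:{1-\<delta>..1}|lebesgue. C powr r * exp ((r*m)*(t-1)))"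
    unfolding g_def using d by (intro integral_lebesgue_on_01_indicator) auto
  also have "\<dots> = integral\<^sup>L (lebesgue_on {1-\<delta>..1}) (\<lambda>t. C powr r * exp ((r*m)*(t-1)))"
    by (rule set_integral_eq_integral_lebesgue_on)
  also have "\<dots> = C powr r * Z"
    using integral_exp_lebesgue_on[of "1-\<delta>" 1 "r*m" 1] d p m by (simp add: Z_def)
  finally have gI: "integral\<^sup>L (lebesgue_on {0..1}) g = C powr r * Z" .
  have "integral\<^sup>L (lebesgue_on {0..1}) g \<le> integral\<^sup>L (lebesgue_on {0..1}) (\<lambda>t. \<bar>f t\<bar> powr r)"
  proof (rule integral_mono[OF _ fi])
    show "integrable (lebesgue_on {0..1}) g"
      unfolding g_def by (intro integrable_indicator_times_continuous continuous_intros)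
    fix t assume "t \<in> space (lebesgue_on {0..1::real})"
    show "g t \<le> \<bar>f t\<bar> powr r"
    proof (cases "t \<in> {1-\<delta>..1}")
      case True
      have "C powr r * exp ((r*m)*(t-1)) = (C * exp (m*(t-1))) powr r"
        using C by (simp add: powr_mult exp_powr_real mult_ac)
      also have "\<dots> \<le> \<bar>f t\<bar> powr r"
        using tail[OF True] C p by (intro powr_mono2) auto
      finally show ?thesis unfolding g_def using True by simp
    qed (simp add: g_def)
  qed
  then have "(C powr r * Z) powr (1/r) \<le> lpnorm p f"
    using p C Z0 unfolding gI by (simp add: lpnorm_def powr_mono2)
  then show ?thesis using p C Z0 unfolding Z_def[symmetric] by (simp add: powr_mult powr_powr)
qed

lemma Vk_exp_neg_ge:
  assumes d: "0 < \<delta>" "\<delta> \<le> 1/4" and n: "n \<ge> 2" and a: "a \<ge> 0" and c: "c \<ge> 0"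
    and t: "t \<in> {1-\<delta>..1}"
  defines "m \<equiv> (n-1)/(1-2*\<delta>)"
  shows "c * exp (\<mu> - 2*\<delta>*\<bar>\<mu>\<bar>) / Gamma n * exp (m*(t-1)) * ((1 - exp (-(m+a)*\<delta>)) / (m+a))
    \<le> Vk \<mu> n (\<lambda>y. c * exp (-a*y)) t"
proof -
  define K where "K = c * exp (\<mu> - 2*\<delta>*\<bar>\<mu>\<bar>) / Gamma n * exp (m*(t-1))"
  have m0: "m + a > 0" unfolding m_def using n d a by (simp add: add_pos_nonneg)
  have t01: "t \<in> {0..1}" using t d by auto
  have "integral\<^sup>L (lebesgue_on {0..\<delta>}) (\<lambda>y. exp (-(m+a)*(y-0)))
      = (exp (-(m+a)*(\<delta>-0)) - exp (-(m+a)*(0-0))) / (-(m+a))"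
    by (rule integral_exp_lebesgue_on) (use d m0 in auto)
  also have "\<dots> = (1 - exp (-(m+a)*\<delta>)) / (m+a)"
    using m0 by (simp add: field_simps)
  finally have "K * ((1 - exp (-(m+a)*\<delta>)) / (m+a))
      = integral\<^sup>L (lebesgue_on {0..\<delta>}) (\<lambda>y. K * exp (-(m+a)*(y-0)))"
    by simp
  also have "\<dots> = integral\<^sup>L (lebesgue_on {0..1}) (\<lambda>y. indicator {0..\<delta>} y * (K * exp (-(m+a)*(y-0))))"
    using d by (simp add: integral_lebesgue_on_01_indicator set_integral_eq_integral_lebesgue_on)
  also have "\<dots> \<le> integral\<^sup>L (lebesgue_on {0..1}) (\<lambda>y. Vk_kernel \<mu> n (t - y) * (c * exp (-a*y)))"
  proof (rule integral_mono)
    show "integrable (lebesgue_on {0..1}) (\<lambda>y. indicator {0..\<delta>} y * (K * exp (-(m+a)*(y-0))))"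
      by (intro integrable_indicator_times_continuous continuous_intros)
    show "integrable (lebesgue_on {0..1}) (\<lambda>y. Vk_kernel \<mu> n (t - y) * (c * exp (-a*y)))"
      using n by (intro Vk_integrand_integrable continuous_imp_integrable_real continuous_intros) auto
    fix y assume "y \<in> space (lebesgue_on {0..1::real})"
    show "indicator {0..\<delta>} y * (K * exp (-(m+a)*(y-0))) \<le> Vk_kernel \<mu> n (t - y) * (c * exp (-a*y))"
    proof (cases "y \<in> {0..\<delta>}")
      case True
      define X where "X = c * exp (\<mu> - 2*\<delta>*\<bar>\<mu>\<bar>) / Gamma n"
      have arg: "-a*y + m*((t-y)-1) = m*(t-1) + -(m+a)*(y-0)" by (simp add: algebra_simps)
      have "indicator {0..\<delta>} y * (K * exp (-(m+a)*(y-0))) = X * exp (-a*y + m*((t-y)-1))"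
        using True unfolding arg exp_add by (simp add: K_def X_def mult_ac)
      also have "\<dots> = c * exp (-a*y) * (exp (\<mu> - 2*\<delta>*\<bar>\<mu>\<bar>) / Gamma n * exp (m * ((t-y)-1)))"
        unfolding exp_add by (simp add: X_def mult_ac)
      also have "\<dots> \<le> c * exp (-a*y) * Vk_kernel \<mu> n (t - y)"
        unfolding m_def using True t d n c by (intro mult_left_mono Vk_kernel_ge) auto
      finally show ?thesis by (simp add: mult_ac)
    qed (use c n Vk_kernel_nonneg in simp)
  qed
  also have "\<dots> = Vk \<mu> n (\<lambda>y. c * exp (-a*y)) t"
    by (rule Vk_eq_integral_kernel[OF t01, symmetric])
  finally show ?thesis by (simp add: K_def)
qed

lemma opnorm_Vk_ge_finite:
  assumes p: "p = ereal r" "r \<ge> 1" and d: "0 < \<delta>" "\<delta> \<le> 1/4" and n: "n \<ge> 2"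
    and l: "n - 1 + \<mu> > 0" and a: "a > 0"
  defines "m \<equiv> (n-1)/(1-2*\<delta>)"
  shows "exp (\<mu> - 2*\<delta>*\<bar>\<mu>\<bar>) / Gamma n * ((1 - exp (-(m+a)*\<delta>)) / (m+a)) *
      (((1 - exp (-(r*m)*\<delta>)) / (r*m)) / ((1 - exp (-a*r)) / (a*r))) powr (1/r)
    \<le> opnorm p (Vk \<mu> n)"
proof -
  define Y where "Y = (1 - exp (-a*r)) / (a*r)"
  define Z where "Z = (1 - exp (-(r*m)*\<delta>)) / (r*m)"
  define KW where "KW = exp (\<mu> - 2*\<delta>*\<bar>\<mu>\<bar>) / Gamma n * ((1 - exp (-(m+a)*\<delta>)) / (m+a))"
  define c where "c = 1 / Y powr (1/r)"
  have r0: "r > 0" and p1: "1 \<le> p" using p by auto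
  have m0: "m > 0" unfolding m_def using n d by simp
  have Y0: "Y > 0" unfolding Y_def using a r0 by (auto intro!: divide_pos_pos)
  have Z0: "Z \<ge> 0" unfolding Z_def using m0 r0 d by (auto intro!: divide_nonneg_pos)
  have "-(m+a)*\<delta> \<le> 0" using m0 a d by (intro mult_nonpos_nonneg) auto
  then have "exp (-(m+a)*\<delta>) \<le> 1" by simp
  then have KW0: "KW \<ge> 0" unfolding KW_def using m0 a n by (auto intro!: divide_nonneg_pos mult_nonneg_nonneg)
  have c0: "c > 0" unfolding c_def using Y0 by simp
  define u where "u = (\<lambda>y. c * exp (-a*y))"
  have Yeq: "(exp (r * -a) - 1) / (r * -a) = Y" unfolding Y_def using a r0 by (simp add: field_simps)
  have "-a \<noteq> 0" using a by simp
  note L = lpnorm_exp[OF p(1) r0 c0[THEN less_imp_le] this, unfolded Yeq]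
  have u: "inLp p u" "lpnorm p u = 1"
    unfolding u_def using L Y0 by (simp_all add: c_def)
  have ui: "integrable (lebesgue_on {0..1}) (\<lambda>y. exp (-(n-1+\<mu>)*y) * \<bar>u y\<bar>)"
    by (rule Holder_exp_neg(1)[OF p1 l u(1)])
  obtain B where B: "\<And>t. t \<in> {0..1} \<Longrightarrow> \<bar>Vk \<mu> n u t\<bar> \<le> B"
    using Vk_bounded[OF _ ui] n by force
  have "c * KW * Z powr (1/r) \<le> lpnorm p (Vk \<mu> n u)"
    unfolding Z_def
  proof (rule lpnorm_ge_exp_tail[OF p(1) r0 Vk_measurable B])
    show "u \<in> borel_measurable borel" unfolding u_def by measurable
    fix t assume t: "t \<in> {1-\<delta>..1}"
    have "c * exp (\<mu> - 2*\<delta>*\<bar>\<mu>\<bar>) / Gamma n * exp (m*(t-1)) * ((1 - exp (-(m+a)*\<delta>)) / (m+a)) \<le> Vk \<mu> n u t"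
      unfolding u_def m_def using d n a c0 t by (intro Vk_exp_neg_ge) auto
    then show "c * KW * exp (m*(t-1)) \<le> \<bar>Vk \<mu> n u t\<bar>" by (simp add: KW_def mult_ac)
  qed (use d m0 c0 KW0 in auto)
  also have "\<dots> \<le> opnorm p (Vk \<mu> n)"
    using n u by (intro lpnorm_le_opnorm[OF Vk_Lp_bounded[OF p1 _ l]]) auto
  finally show ?thesis
    using Y0 Z0 unfolding Y_def[symmetric] Z_def[symmetric] KW_def[symmetric] c_def
    by (simp add: powr_divide)
qed

lemma opnorm_Vk_ge_infinite:
  assumes d: "0 < \<delta>" "\<delta> \<le> 1/4" and n: "n \<ge> 2" and l: "n - 1 + \<mu> > 0"
  defines "m \<equiv> (n-1)/(1-2*\<delta>)"
  shows "exp (\<mu> - 2*\<delta>*\<bar>\<mu>\<bar>) / Gamma n * ((1 - exp (-(\<delta>*m))) / m) * exp (-\<delta>) \<le> opnorm \<infinity> (Vk \<mu> n)"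
proof -
  define KW where "KW = exp (\<mu> - 2*\<delta>*\<bar>\<mu>\<bar>) / Gamma n * ((1 - exp (-(\<delta>*m))) / m)"
  have m1: "m \<ge> 1" unfolding m_def using n d by (simp add: field_simps)
  have KW0: "KW \<ge> 0" unfolding KW_def using m1 d n by (auto intro!: divide_nonneg_pos mult_nonneg_nonneg)
  have ess1: "esssup (lebesgue_on {0..1::real}) (\<lambda>x. ereal \<bar>1\<bar>) = 1"
    using esssup_const[OF emeasure_lebesgue_01_space_neq_0, of "ereal 1"] by simp
  have u: "inLp \<infinity> (\<lambda>y. 1)" "lpnorm \<infinity> (\<lambda>y. 1) = 1"
    unfolding inLp_def lpnorm_def using ess1 by auto
  have ui: "integrable (lebesgue_on {0..1}) (\<lambda>y. exp (-(n-1+\<mu>)*y) * \<bar>1\<bar>)"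
    by (intro continuous_imp_integrable_real continuous_intros)
  obtain B where B: "\<And>t. t \<in> {0..1} \<Longrightarrow> \<bar>Vk \<mu> n (\<lambda>y. 1) t\<bar> \<le> B"
    using Vk_bounded[OF _ ui] n by force
  \<comment> \<open>on \<open>[1 - \<delta>/m, 1]\<close> the factor \<open>exp (m*(t-1))\<close> of the lower bound is at least \<open>exp (-\<delta>)\<close>\<close>
  have "KW * exp (-\<delta>) \<le> lpnorm \<infinity> (Vk \<mu> n (\<lambda>y. 1))"
  proof (rule lpnorm_infinity_ge[OF Vk_measurable B])
    show "0 \<le> 1 - \<delta>/m" "1 - \<delta>/m < 1" using d m1 by (auto simp: field_simps)
    fix t assume t: "t \<in> {1 - \<delta>/m..1}"
    then have "-\<delta> \<le> m*(t-1)" using m1 by (simp add: field_simps)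
    then have "KW * exp (-\<delta>) \<le> KW * exp (m*(t-1))" using KW0 by (intro mult_left_mono) auto
    also have "\<dots> \<le> Vk \<mu> n (\<lambda>y. 1) t"
    proof -
      have "\<delta>/m \<le> \<delta>/1" using d m1 by (intro divide_left_mono) auto
      then have "t \<in> {1-\<delta>..1}" using t by auto
      then have "1 * exp (\<mu> - 2*\<delta>*\<bar>\<mu>\<bar>) / Gamma n * exp (m*(t-1)) * ((1 - exp (-(m+0)*\<delta>)) / (m+0))
          \<le> Vk \<mu> n (\<lambda>y. 1 * exp (-0*y)) t"
        unfolding m_def using d n by (intro Vk_exp_neg_ge) auto
      then show ?thesis by (simp add: KW_def mult_ac)
    qed
    finally show "KW * exp (-\<delta>) \<le> \<bar>Vk \<mu> n (\<lambda>y. 1) t\<bar>" by simp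
  qed auto
  also have "\<dots> \<le> opnorm \<infinity> (Vk \<mu> n)"
    using n u by (intro lpnorm_le_opnorm[OF Vk_Lp_bounded[OF _ _ l]]) auto
  finally show ?thesis unfolding KW_def .
qed

lemma Gamma_plus1_pos: "(n::real) > 0 \<Longrightarrow> Gamma (n + 1) = n * Gamma n"
  by (rule Gamma_plus1) (use nonpos_Ints_nonpos in force)

lemma tendsto_exp_neg_mult_0:
  fixes g :: "'a \<Rightarrow> real"
  assumes "\<kappa> > 0" "filterlim g at_top F"
  shows "((\<lambda>x. exp (-(\<kappa> * g x))) \<longlongrightarrow> 0) F"
proof -
  have "((\<lambda>y::real. exp (-(\<kappa> * y))) \<longlongrightarrow> 0) at_top" using assms(1) by real_asymp
  then show ?thesis using assms(2) by (rule filterlim_compose)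
qed

lemma Vk_ratio_le:
  assumes p: "1 \<le> p" and n: "n \<ge> 1" and l: "n - 1 + \<mu> > 0"
  shows "opnorm p (Vk \<mu> n) / (Cp p * exp \<mu> / Gamma (n + 1)) \<le>
    exp_Lp_norm p (n-1+\<mu>) * exp_neg_Lq_norm p (n-1+\<mu>) * (n-1+\<mu>) * exp (-(n-1+\<mu>)) * (n / (n-1+\<mu>)) / Cp p"
proof -
  define l where "l = n - 1 + \<mu>"
  have G: "Gamma n > 0" using n by simp
  have Gs: "Gamma (n + 1) = n * Gamma n" using n by (intro Gamma_plus1_pos) simp
  have Cp0: "Cp p > 0" using Cp_pos[OF p] .
  have "opnorm p (Vk \<mu> n) / (Cp p * exp \<mu> / Gamma (n + 1))
      \<le> exp (-(n-1)) / Gamma n * (exp_Lp_norm p l * exp_neg_Lq_norm p l) / (Cp p * exp \<mu> / (n * Gamma n))"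
    unfolding Gs l_def using opnorm_le[OF Vk_Lp_bounded[OF p n l]] n Cp0 G
    by (intro divide_right_mono) auto
  also have "\<dots> = exp_Lp_norm p l * exp_neg_Lq_norm p l * l * exp (-l) * (n / l) / Cp p"
  proof -
    have "exp (-(n-1)) = exp (-l) * exp \<mu>" by (simp add: l_def flip: exp_add)
    moreover have "Gamma n \<noteq> 0" "l > 0" using G l by (simp_all add: l_def)
    ultimately show ?thesis using n Cp0 by (simp add: field_simps)
  qed
  finally show ?thesis unfolding l_def .
qed

lemma Vk_ratio_eventually_less:
  assumes p: "1 \<le> p" and c: "c > 1"
  shows "\<forall>\<^sub>F n in at_top. opnorm p (Vk \<mu> n) / (Cp p * exp \<mu> / Gamma (n + 1)) < c"
proof -
  define AB where "AB \<nu> = exp_Lp_norm p \<nu> * exp_neg_Lq_norm p \<nu> * \<nu> * exp (-\<nu>)" for \<nu>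
  have Cp0: "Cp p > 0" using Cp_pos[OF p] .
  have "((\<lambda>n. AB (n-1+\<mu>)) \<longlongrightarrow> Cp p) at_top"
    unfolding AB_def by (rule filterlim_compose[OF exp_norms_product_tendsto_Cp[OF p]]) real_asymp
  moreover have "((\<lambda>n::real. n / (n-1+\<mu>)) \<longlongrightarrow> 1) at_top" by real_asymp
  ultimately have "((\<lambda>n. AB (n-1+\<mu>) * (n / (n-1+\<mu>)) / Cp p) \<longlongrightarrow> Cp p * 1 / Cp p) at_top"
    using Cp0 by (intro tendsto_intros) auto
  then have "\<forall>\<^sub>F n in at_top. AB (n-1+\<mu>) * (n / (n-1+\<mu>)) / Cp p < c"
    using c Cp0 by (intro order_tendstoD(2)) auto
  moreover have "\<forall>\<^sub>F n in at_top. opnorm p (Vk \<mu> n) / (Cp p * exp \<mu> / Gamma (n + 1))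
      \<le> AB (n-1+\<mu>) * (n / (n-1+\<mu>)) / Cp p"
    using eventually_ge_at_top[of "max 1 (2 - \<mu>)"]
    by eventually_elim (unfold AB_def, rule Vk_ratio_le[OF p], auto)
  ultimately show ?thesis by eventually_elim simp
qed

lemma Vk_ratio_ge_finite:
  assumes p: "p = ereal r" "r \<ge> 1" and d: "0 < \<delta>" "\<delta> \<le> 1/4" and n: "n \<ge> 2"
    and l: "n - 1 + \<mu> > 0" and s: "s > 0"
  defines "m \<equiv> (n-1)/(1-2*\<delta>)"
  shows "exp (-2*\<delta>*\<bar>\<mu>\<bar>) * (n/m) * (s powr (1/r) / ((1+s) * Cp p)) *
      ((1 - exp (-((1+s)*\<delta>*m))) * ((1 - exp (-(r*\<delta>*m))) / (1 - exp (-(s*r*m)))) powr (1/r))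
    \<le> opnorm p (Vk \<mu> n) / (Cp p * exp \<mu> / Gamma (n + 1))"
proof -
  have r0: "r > 0" and Cp0: "Cp p > 0" and G: "Gamma n > 0" using p n Cp_pos[of p] by auto
  have Gn: "Gamma n \<noteq> 0" using G by simp
  have m0: "m > 0" unfolding m_def using n d by simp
  define E where "E = exp (-2*\<delta>*\<bar>\<mu>\<bar>)"
  define X where "X = 1 - exp (-((1+s)*\<delta>*m))"
  define Q where "Q = (1 - exp (-(r*\<delta>*m))) / (1 - exp (-(s*r*m)))"
  have "exp (-(s*r*m)) < 1" using s r0 m0 by simp
  have LB0: "exp (\<mu> - 2*\<delta>*\<bar>\<mu>\<bar>) / Gamma n * ((1 - exp (-(m+s*m)*\<delta>)) / (m+s*m)) *
      (((1 - exp (-(r*m)*\<delta>)) / (r*m)) / ((1 - exp (-(s*m)*r)) / ((s*m)*r))) powr (1/r)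
      \<le> opnorm p (Vk \<mu> n)"
    by (rule opnorm_Vk_ge_finite[OF p d n l, of "s*m", folded m_def]) (use s m0 in simp)
  have e1: "exp (\<mu> - 2*\<delta>*\<bar>\<mu>\<bar>) = exp \<mu> * E" unfolding E_def by (simp flip: exp_add)
  have e2: "(1 - exp (-(m+s*m)*\<delta>)) / (m+s*m) = X / ((1+s)*m)"
    unfolding X_def by (simp add: algebra_simps)
  have e3: "((1 - exp (-(r*m)*\<delta>)) / (r*m)) / ((1 - exp (-(s*m)*r)) / ((s*m)*r)) = s * Q"
    unfolding Q_def using r0 m0 s \<open>exp (-(s*r*m)) < 1\<close> by (simp add: field_simps)
  have LB: "exp \<mu> * E / Gamma n * (X / ((1+s)*m)) * (s powr (1/r) * Q powr (1/r)) \<le> opnorm p (Vk \<mu> n)"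
    using LB0[unfolded e1 e2 e3 powr_mult] .
  have Gs: "Gamma (n + 1) = n * Gamma n" using n by (intro Gamma_plus1_pos) simp
  have "E * (n/m) * (s powr (1/r) / ((1+s) * Cp p)) * (X * Q powr (1/r))
      = exp \<mu> * E / Gamma n * (X / ((1+s)*m)) * (s powr (1/r) * Q powr (1/r)) / (Cp p * exp \<mu> / (n * Gamma n))"
    using Gn m0 s n Cp0 by (simp add: divide_simps ac_simps)
  also have "\<dots> \<le> opnorm p (Vk \<mu> n) / (Cp p * exp \<mu> / Gamma (n + 1))"
    unfolding Gs using LB G n Cp0 by (intro divide_right_mono) auto
  finally show ?thesis unfolding E_def X_def Q_def .
qed

lemma Vk_ratio_ge_infinite:
  assumes d: "0 < \<delta>" "\<delta> \<le> 1/4" and n: "n \<ge> 2" and l: "n - 1 + \<mu> > 0"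
  defines "m \<equiv> (n-1)/(1-2*\<delta>)"
  shows "exp (-2*\<delta>*\<bar>\<mu>\<bar>) * (n/m) * exp (-\<delta>) * (1 - exp (-(\<delta>*m)))
    \<le> opnorm \<infinity> (Vk \<mu> n) / (Cp \<infinity> * exp \<mu> / Gamma (n + 1))"
proof -
  have G: "Gamma n > 0" using n by simp
  then have Gn: "Gamma n \<noteq> 0" by simp
  have m0: "m > 0" unfolding m_def using n d by simp
  have "exp (\<mu> - 2*\<delta>*\<bar>\<mu>\<bar>) = exp \<mu> * exp (-2*\<delta>*\<bar>\<mu>\<bar>)" by (simp flip: exp_add)
  note LB = opnorm_Vk_ge_infinite[OF d n l, folded m_def, unfolded this]
  have Gs: "Gamma (n + 1) = n * Gamma n" using n by (intro Gamma_plus1_pos) simp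
  have Cp1: "Cp \<infinity> = 1" by (simp add: Cp_def)
  have "exp (-2*\<delta>*\<bar>\<mu>\<bar>) * (n/m) * exp (-\<delta>) * (1 - exp (-(\<delta>*m)))
      = exp \<mu> * exp (-2*\<delta>*\<bar>\<mu>\<bar>) / Gamma n * ((1 - exp (-(\<delta>*m))) / m) * exp (-\<delta>) / (Cp \<infinity> * exp \<mu> / (n * Gamma n))"
    using Gn m0 n by (simp add: Cp1 field_simps)
  also have "\<dots> \<le> opnorm \<infinity> (Vk \<mu> n) / (Cp \<infinity> * exp \<mu> / Gamma (n + 1))"
    unfolding Gs using LB G n by (intro divide_right_mono) (auto simp: Cp1)
  finally show ?thesis .
qed

lemma minus_1_divide_asymptotics:
  fixes c :: real
  assumes "c > 0"
  shows "filterlim (\<lambda>n::real. (n - 1) / c) at_top at_top" "((\<lambda>n::real. n / ((n - 1) / c)) \<longlongrightarrow> c) at_top"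
proof -
  have "filterlim (\<lambda>n::real. 1/c * (n - 1)) at_top at_top"
    using assms by (intro filterlim_tendsto_pos_mult_at_top[OF tendsto_const]) (auto, real_asymp)
  then show "filterlim (\<lambda>n::real. (n - 1) / c) at_top at_top" by simp
  have "((\<lambda>n::real. c * (n / (n - 1))) \<longlongrightarrow> c * 1) at_top"
    by (intro tendsto_intros) real_asymp
  then show "((\<lambda>n::real. n / ((n - 1) / c)) \<longlongrightarrow> c) at_top" by (simp add: mult.commute)
qed

lemma Vk_ratio_eventually_greater_finite:
  assumes p: "p = ereal r" "r \<ge> 1" and d: "0 < \<delta>" "\<delta> \<le> 1/4" and s: "s > 0"
    and c: "c < exp (-2*\<delta>*\<bar>\<mu>\<bar>) * (1-2*\<delta>) * (s powr (1/r) / ((1+s) * Cp p))"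
  shows "\<forall>\<^sub>F n in at_top. c < opnorm p (Vk \<mu> n) / (Cp p * exp \<mu> / Gamma (n + 1))"
proof -
  define m where "m n = (n-1)/(1-2*\<delta>)" for n :: real
  define L where "L n = exp (-2*\<delta>*\<bar>\<mu>\<bar>) * (n / m n) * (s powr (1/r) / ((1+s) * Cp p)) *
      ((1 - exp (-((1+s)*\<delta>*m n))) * ((1 - exp (-(r*\<delta>*m n))) / (1 - exp (-(s*r*m n)))) powr (1/r))" for n
  have r0: "r > 0" using p by simp
  have "1 - 2*\<delta> > 0" using d by simp
  note m = minus_1_divide_asymptotics(1)[OF this, folded m_def]
    and nm = minus_1_divide_asymptotics(2)[OF this, folded m_def]
  have "(L \<longlongrightarrow> exp (-2*\<delta>*\<bar>\<mu>\<bar>) * (1-2*\<delta>) * (s powr (1/r) / ((1+s) * Cp p)) *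
      ((1 - 0) * ((1 - 0) / (1 - 0)) powr (1/r))) at_top"
    unfolding L_def using d s r0 by (intro tendsto_intros nm tendsto_exp_neg_mult_0[OF _ m]) auto
  then have "\<forall>\<^sub>F n in at_top. c < L n" using c by (intro order_tendstoD(1)) simp_all
  moreover have "\<forall>\<^sub>F n in at_top. L n \<le> opnorm p (Vk \<mu> n) / (Cp p * exp \<mu> / Gamma (n + 1))"
    using eventually_ge_at_top[of "max 2 (2 - \<mu>)"]
    by eventually_elim (unfold L_def m_def, rule Vk_ratio_ge_finite[OF p d], use s in auto)
  ultimately show ?thesis by eventually_elim simp
qed

lemma Vk_ratio_eventually_greater_infinite:
  assumes d: "0 < \<delta>" "\<delta> \<le> 1/4" and c: "c < exp (-2*\<delta>*\<bar>\<mu>\<bar>) * (1-2*\<delta>) * exp (-\<delta>)"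
  shows "\<forall>\<^sub>F n in at_top. c < opnorm \<infinity> (Vk \<mu> n) / (Cp \<infinity> * exp \<mu> / Gamma (n + 1))"
proof -
  define m where "m n = (n-1)/(1-2*\<delta>)" for n :: real
  define L where "L n = exp (-2*\<delta>*\<bar>\<mu>\<bar>) * (n / m n) * exp (-\<delta>) * (1 - exp (-(\<delta>*m n)))" for n
  have "1 - 2*\<delta> > 0" using d by simp
  note m = minus_1_divide_asymptotics(1)[OF this, folded m_def]
    and nm = minus_1_divide_asymptotics(2)[OF this, folded m_def]
  have "(L \<longlongrightarrow> exp (-2*\<delta>*\<bar>\<mu>\<bar>) * (1-2*\<delta>) * exp (-\<delta>) * (1 - 0)) at_top"
    unfolding L_def using d by (intro tendsto_intros nm tendsto_exp_neg_mult_0[OF _ m]) auto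
  then have "\<forall>\<^sub>F n in at_top. c < L n" using c by (intro order_tendstoD(1)) simp_all
  moreover have "\<forall>\<^sub>F n in at_top. L n \<le> opnorm \<infinity> (Vk \<mu> n) / (Cp \<infinity> * exp \<mu> / Gamma (n + 1))"
    using eventually_ge_at_top[of "max 2 (2 - \<mu>)"]
    by eventually_elim (unfold L_def m_def, rule Vk_ratio_ge_infinite[OF d], auto)
  ultimately show ?thesis by eventually_elim simp
qed

lemma exists_delta_exp_bound_gt:
  fixes c \<mu> :: real
  assumes "c < 1"
  obtains \<delta> where "0 < \<delta>" "\<delta> \<le> 1/4" "c < exp (-2*\<delta>*\<bar>\<mu>\<bar>) * (1-2*\<delta>) * exp (-\<delta>) / (1+\<delta>)"
proof -
  define lb where "lb \<delta> = exp (-2*\<delta>*\<bar>\<mu>\<bar>) * (1-2*\<delta>) * exp (-\<delta>) / (1+\<delta>)" for \<delta> :: real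
  have "(lb \<longlongrightarrow> lb 0) (at_right 0)"
    unfolding lb_def by (intro tendsto_intros tendsto_ident_at) auto
  moreover have "lb 0 = 1" by (simp add: lb_def)
  ultimately have "\<forall>\<^sub>F \<delta> in at_right 0. c < lb \<delta>" using assms by (metis order_tendstoD(1))
  moreover have "\<forall>\<^sub>F \<delta> in at_right 0. \<delta> < (1/4::real)"
    by (intro order_tendstoD(2)[OF tendsto_ident_at]) simp
  ultimately have "\<forall>\<^sub>F \<delta> in at_right 0. 0 < \<delta> \<and> \<delta> < 1/4 \<and> c < lb \<delta>"
    using eventually_at_right_less by eventually_elim auto
  then show ?thesis
    using that eventually_happens[of _ "at_right (0::real)"] unfolding lb_def by force
qed

lemma Vk_ratio_eventually_greater:
  assumes p: "1 \<le> p" and c: "c < 1"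
  shows "\<forall>\<^sub>F n in at_top. c < opnorm p (Vk \<mu> n) / (Cp p * exp \<mu> / Gamma (n + 1))"
proof -
  obtain \<delta> where d: "0 < \<delta>" "\<delta> \<le> 1/4"
    and c\<delta>: "c < exp (-2*\<delta>*\<bar>\<mu>\<bar>) * (1-2*\<delta>) * exp (-\<delta>) / (1+\<delta>)"
    using exists_delta_exp_bound_gt[OF c] by blast
  define A where "A = exp (-2*\<delta>*\<bar>\<mu>\<bar>) * (1-2*\<delta>)"
  have A0: "A \<ge> 0" using d by (simp add: A_def)
  have Ae: "A * exp (-\<delta>) \<le> A" using A0 d by (simp add: mult_left_le)
  have "A * exp (-\<delta>) / (1+\<delta>) \<le> A * exp (-\<delta>) / 1"
    using A0 d by (intro divide_left_mono) auto
  moreover have "A * exp (-\<delta>) / (1+\<delta>) \<le> A / (1+\<delta>)"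
    using Ae d by (intro divide_right_mono) auto
  moreover have "c < A * exp (-\<delta>) / (1+\<delta>)" using c\<delta> by (simp add: A_def)
  ultimately have c\<delta>': "c < A * exp (-\<delta>)" "c < A / (1+\<delta>)" "c < A"
    using Ae by auto
  \<comment> \<open>\<open>s = 1/(r-1)\<close> maximises \<open>s powr (1/r) / (1+s)\<close>, the maximum being \<open>Cp p\<close>; for \<open>p = 1\<close>
    the supremum 1 is only approached as \<open>s \<rightarrow> \<infinity>\<close>, so \<open>s = 1/\<delta>\<close> is used\<close>
  show ?thesis
    using p
  proof (cases rule: Lp_exponent_cases)
    case 1
    from c\<delta>'(1) show ?thesis using Vk_ratio_eventually_greater_infinite[OF d, of c \<mu>] 1 by (simp add: A_def)
  next
    case 2
    have "A * ((1/\<delta>) powr (1/1) / ((1 + 1/\<delta>) * Cp p)) = A / (1+\<delta>)"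
      using d 2 by (simp add: Cp_def field_simps)
    then have "c < A * ((1/\<delta>) powr (1/1) / ((1 + 1/\<delta>) * Cp p))" using c\<delta>'(2) by linarith
    from Vk_ratio_eventually_greater_finite[OF _ _ d _ this[unfolded A_def]] show ?thesis
      using d 2 by (simp add: one_ereal_def)
  next
    case (3 r)
    have "(1/(r-1)) powr (1/r) > 0" "1 + 1/(r-1) > 0" using 3 by (auto simp: add_pos_pos)
    then have "(1/(r-1)) powr (1/r) / ((1 + 1/(r-1)) * Cp p) = 1"
      unfolding 3(1) Cp_ereal_eq[OF 3(2)] by simp
    then have "A * ((1/(r-1)) powr (1/r) / ((1 + 1/(r-1)) * Cp p)) = A" by (simp only: mult_1_right)
    then have "c < A * ((1/(r-1)) powr (1/r) / ((1 + 1/(r-1)) * Cp p))" using c\<delta>'(3) by linarith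
    from Vk_ratio_eventually_greater_finite[OF _ _ d _ this[unfolded A_def]] show ?thesis
      using 3 by simp
  qed
qed

lemma Vk_opnorm_ratio_tendsto_1:
  assumes "1 \<le> p"
  shows "((\<lambda>n. opnorm p (Vk \<mu> n) / (Cp p * exp \<mu> / Gamma (n + 1))) \<longlongrightarrow> 1) at_top"
  using Vk_ratio_eventually_greater[OF assms] Vk_ratio_eventually_less[OF assms] by (rule order_tendstoI)

lemma Vk_minus_Sop_ratio_le:
  assumes p: "1 \<le> p" and n: "n \<ge> 3" and l: "n - 1 + \<mu> > 0"
  defines "\<nu> \<equiv> (n-1)/2"
  shows "opnorm p (\<lambda>u t. Vk \<mu> n u t - exp (-(n-1)) / Gamma n * Sop (n-1+\<mu>) u t) / (Cp p * exp \<mu> / Gamma (n + 1))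
    \<le> 32 * exp \<bar>\<mu>\<bar> / (Cp p * exp \<mu>) * (exp_Lp_norm p \<nu> * exp_neg_Lq_norm p \<nu> * \<nu> * exp (-\<nu>)) *
      (n / ((n-1) * \<nu>))"
proof -
  have G: "Gamma n > 0" using n by simp
  have Gs: "Gamma (n + 1) = n * Gamma n" using n by (intro Gamma_plus1_pos) simp
  have Cp0: "Cp p > 0" using Cp_pos[OF p] .
  have "opnorm p (\<lambda>u t. Vk \<mu> n u t - exp (-(n-1)) / Gamma n * Sop (n-1+\<mu>) u t) / (Cp p * exp \<mu> / Gamma (n + 1))
      \<le> 32 * exp \<bar>\<mu>\<bar> * exp (-\<nu>) / ((n-1) * Gamma n) *
        (exp_Lp_norm p \<nu> * exp_neg_Lq_norm p \<nu>) / (Cp p * exp \<mu> / (n * Gamma n))"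
    unfolding Gs \<nu>_def using opnorm_le[OF Vk_minus_Sop_Lp_bounded[OF p n l]] G n Cp0
    by (intro divide_right_mono) auto
  also have "\<dots> = 32 * exp \<bar>\<mu>\<bar> / (Cp p * exp \<mu>) * (exp_Lp_norm p \<nu> * exp_neg_Lq_norm p \<nu> * \<nu> * exp (-\<nu>)) *
      (n / ((n-1) * \<nu>))"
  proof -
    have "\<nu> > 0" "n - 1 = 2*\<nu>" using n by (auto simp: \<nu>_def)
    moreover have "Gamma n \<noteq> 0" using G by linarith
    ultimately show ?thesis using n Cp0 by (simp add: field_simps)
  qed
  finally show ?thesis .
qed

lemma Vk_minus_Sop_opnorm_ratio_tendsto_0:
  assumes p: "1 \<le> p"
  shows "((\<lambda>n. opnorm p (\<lambda>u t. Vk \<mu> n u t - exp (-(n-1)) / Gamma n * Sop (n-1+\<mu>) u t)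
      / (Cp p * exp \<mu> / Gamma (n + 1))) \<longlongrightarrow> 0) at_top"
proof (rule tendsto_sandwich[OF _ _ tendsto_const])
  define AB where "AB \<nu> = exp_Lp_norm p \<nu> * exp_neg_Lq_norm p \<nu> * \<nu> * exp (-\<nu>)" for \<nu>
  define V where "V n = 32 * exp \<bar>\<mu>\<bar> / (Cp p * exp \<mu>) * AB ((n-1)/2) * (n / ((n-1) * ((n-1)/2)))"
    for n :: real
  have "((\<lambda>n. AB ((n-1)/2)) \<longlongrightarrow> Cp p) at_top"
    unfolding AB_def by (rule filterlim_compose[OF exp_norms_product_tendsto_Cp[OF p]]) real_asymp
  moreover have "((\<lambda>n::real. n / ((n-1) * ((n-1)/2))) \<longlongrightarrow> 0) at_top" by real_asymp
  ultimately have "(V \<longlongrightarrow> 32 * exp \<bar>\<mu>\<bar> / (Cp p * exp \<mu>) * Cp p * 0) at_top"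
    unfolding V_def by (intro tendsto_intros)
  then show "(V \<longlongrightarrow> 0) at_top" by simp
  show "\<forall>\<^sub>F n in at_top.
      opnorm p (\<lambda>u t. Vk \<mu> n u t - exp (-(n-1)) / Gamma n * Sop (n-1+\<mu>) u t) / (Cp p * exp \<mu> / Gamma (n + 1)) \<le> V n"
    using eventually_ge_at_top[of "max 3 (2 - \<mu>)"]
    by eventually_elim (unfold V_def AB_def, rule Vk_minus_Sop_ratio_le[OF p], auto)
  show "\<forall>\<^sub>F n in at_top.
      0 \<le> opnorm p (\<lambda>u t. Vk \<mu> n u t - exp (-(n-1)) / Gamma n * Sop (n-1+\<mu>) u t) / (Cp p * exp \<mu> / Gamma (n + 1))"
    using eventually_ge_at_top[of "max 3 (2 - \<mu>)"]
  proof eventually_elim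
    case (elim n)
    then have "n \<ge> 3" "n - 1 + \<mu> > 0" "Gamma (n + 1) > 0" by (auto intro!: Gamma_real_pos)
    then show ?case
      using opnorm_nonneg[OF Vk_minus_Sop_Lp_bounded[OF p]] Cp_pos[OF p] by (intro divide_nonneg_pos) auto
  qed
qed

theorem lemma3p3:
  fixes \<mu> :: real and p :: ereal
  assumes "1 \<le> p"
  shows "((\<lambda>n::real. opnorm p (\<lambda>u t. Vk \<mu> n u t - (exp (-(n - 1)) / Gamma n) * Sop (n - 1 + \<mu>) u t)
              / opnorm p (Vk \<mu> n)) \<longlongrightarrow> 0) at_top
       \<and> ((\<lambda>n::real. opnorm p (Vk \<mu> n) / (Cp p * exp \<mu> / Gamma (n + 1))) \<longlongrightarrow> 1) at_top"
proof
  let ?\<tau> = "\<lambda>n::real. Cp p * exp \<mu> / Gamma (n + 1)"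
  let ?D = "\<lambda>n. opnorm p (\<lambda>u t. Vk \<mu> n u t - (exp (-(n - 1)) / Gamma n) * Sop (n - 1 + \<mu>) u t)"
  show ratio: "((\<lambda>n. opnorm p (Vk \<mu> n) / ?\<tau> n) \<longlongrightarrow> 1) at_top"
    by (rule Vk_opnorm_ratio_tendsto_1[OF assms])
  have "((\<lambda>n. (?D n / ?\<tau> n) / (opnorm p (Vk \<mu> n) / ?\<tau> n)) \<longlongrightarrow> 0 / 1) at_top"
    using Vk_minus_Sop_opnorm_ratio_tendsto_0[OF assms] ratio by (rule tendsto_divide) simp
  moreover have "\<forall>\<^sub>F n in at_top. (?D n / ?\<tau> n) / (opnorm p (Vk \<mu> n) / ?\<tau> n) = ?D n / opnorm p (Vk \<mu> n)"
    using eventually_gt_at_top[of 0]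
  proof eventually_elim
    case (elim n)
    have "Gamma (n + 1) > 0" using elim by (intro Gamma_real_pos) simp
    then show ?case using Cp_pos[OF assms] by simp
  qed
  ultimately show "((\<lambda>n. ?D n / opnorm p (Vk \<mu> n)) \<longlongrightarrow> 0) at_top"
    by (simp add: tendsto_cong)
qed

end
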